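(* For every $E\ge0$, $$S^-(E)=\sup_{k\in K(E)}F(k)-(E+\bar V^-).$$ Moreover $K(E)\neq\emptyset$ if and only if $E\in[E^-_{-\infty},E^+_{-\infty}]$.
   Context: Let $0<\rho_-<\rho_+<1$, $\varphi_\pm=\log\frac{\rho_\pm}{1-\rho_\pm}$, $s(\theta)=\theta\log\theta+(1-\theta)\log(1-\theta)$ on $[0,1]$, $\chi(\rho)=\rho(1-\rho)$. $\mathcal M$ is the set of measurable $\rho:[-1,1]\to[0,1]$, $\mathbb S(\rho)=-\frac12\int_{-1}^1s(\rho(x))dx$, $\mathcal H(\rho,\varphi)=\frac12\int_{-1}^1[(1-\rho)\varphi-\log(1+e^\varphi)]dx$, $\mathcal F=\{\varphi\in C^1([-1,1]):\varphi(\pm1)=\varphi_\pm,\varphi'>0\}$, $\bar V^-=\log(\max_{\rho\in[\rho_-,\rho_+]}\chi(\rho))$, $V^-(\rho)=-\mathbb S(\rho)+\sup_{\varphi\in\mathcal F}\mathcal H(\rho,\varphi)-\bar V^-$, $S^-(E)=\sup\{\mathbb S(\rho):\rho\in\mathcal M,\ V^-(\rho)+\mathbb S(\rho)=E\}$ (sup of empty set $=-\infty$), $E^-_{-\infty}=\inf_{\mathcal M}(\mathbb S+V^-)$, $E^+_{-\infty}=\sup_{\mathcal M}(\mathbb S+V^-)$. Let $m_0=\min_{\rho\in[\rho_-,\rho_+]}(-s(\rho))$, $M_0=\max_{\rho\in[\rho_-,\rho_+]}(-s(\rho))$, and $\gamma_\pm(y)=y\varphi_\pm-\log(1+e^{\varphi_\pm})$.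 For $E\ge0$, $K(E)\subset\mathbb R^4$ is the set of $(x_-,x_+,y_-,y_+)$ with $0\le y_-\le\rho_-<\rho_+\le y_+\le1$, $-1\le x_-\le x_+\le1$, $\frac12\big[(x_-+1)(\gamma_-(y_-)+m_0)+(1-x_+)(\gamma_+(y_+)+m_0)\big]\ge (E+\bar V^-)+m_0$ and $\frac12\big[(x_-+1)(\gamma_-(y_-)+M_0)+(1-x_+)(\gamma_+(y_+)+M_0)\big]\le (E+\bar V^-)+M_0$. On $K(E)$, $F(x_-,x_+,y_-,y_+)=\frac12\big[(x_-+1)\big((-s)(y_-)+\gamma_-(y_-)\big)+(1-x_+)\big((-s)(y_+)+\gamma_+(y_+)\big)\big]$; the supremum over the empty set is $-\infty$. *)

theory Defs
  imports "HOL-Analysis.Analysis"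
begin

text \<open>Parameters rm = rho_minus, rp = rho_plus (0 < rm < rp < 1) are explicit arguments.\<close>

definition xlnx :: "real \<Rightarrow> real" where
  "xlnx t = (if t = 0 then 0 else t * ln t)"

definition sfun :: "real \<Rightarrow> real" where
  "sfun t = xlnx t + xlnx (1 - t)"

definition chi :: "real \<Rightarrow> real" where
  "chi r = r * (1 - r)"

definition phi_b :: "real \<Rightarrow> real" where
  "phi_b r = ln (r / (1 - r))"

definition Mset :: "(real \<Rightarrow> real) set" where
  "Mset = {\<rho>. \<rho> \<in> borel_measurable (lebesgue_on {-1..1}) \<and> (\<forall>x\<in>{-1..1}. 0 \<le> \<rho> x \<and> \<rho> x \<le> 1)}"

definition SS :: "(real \<Rightarrow> real) \<Rightarrow> real" where
  "SS \<rho> = - (1/2) * integral\<^sup>L (lebesgue_on {-1..1}) (\<lambda>x. sfun (\<rho> x))"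

definition HH :: "(real \<Rightarrow> real) \<Rightarrow> (real \<Rightarrow> real) \<Rightarrow> real" where
  "HH \<rho> \<phi> = (1/2) * integral\<^sup>L (lebesgue_on {-1..1})
      (\<lambda>x. (1 - \<rho> x) * \<phi> x - ln (1 + exp (\<phi> x)))"

definition Fset :: "real \<Rightarrow> real \<Rightarrow> (real \<Rightarrow> real) set" where
  "Fset rm rp = {\<phi>. (\<exists>\<phi>'. continuous_on {-1..1} \<phi>' \<and>
        (\<forall>x\<in>{-1..1}. (\<phi> has_real_derivative \<phi>' x) (at x within {-1..1})) \<and>
        (\<forall>x\<in>{-1..1}. \<phi>' x > 0)) \<and>
        \<phi> (-1) = phi_b rm \<and> \<phi> 1 = phi_b rp}"

definition Vbar :: "real \<Rightarrow> real \<Rightarrow> real" where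
  "Vbar rm rp = ln (Sup (chi ` {rm..rp}))"

definition Vminus :: "real \<Rightarrow> real \<Rightarrow> (real \<Rightarrow> real) \<Rightarrow> real" where
  "Vminus rm rp \<rho> = - SS \<rho> + Sup (HH \<rho> ` Fset rm rp) - Vbar rm rp"

definition Sminus :: "real \<Rightarrow> real \<Rightarrow> real \<Rightarrow> ereal" where
  "Sminus rm rp E = Sup ((\<lambda>\<rho>. ereal (SS \<rho>)) ` {\<rho> \<in> Mset. Vminus rm rp \<rho> + SS \<rho> = E})"

definition Eminf_lo :: "real \<Rightarrow> real \<Rightarrow> real" where
  "Eminf_lo rm rp = Inf ((\<lambda>\<rho>. SS \<rho> + Vminus rm rp \<rho>) ` Mset)"

definition Eminf_hi :: "real \<Rightarrow> real \<Rightarrow> real" where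
  "Eminf_hi rm rp = Sup ((\<lambda>\<rho>. SS \<rho> + Vminus rm rp \<rho>) ` Mset)"

definition m0 :: "real \<Rightarrow> real \<Rightarrow> real" where
  "m0 rm rp = Inf ((\<lambda>r. - sfun r) ` {rm..rp})"

definition M0 :: "real \<Rightarrow> real \<Rightarrow> real" where
  "M0 rm rp = Sup ((\<lambda>r. - sfun r) ` {rm..rp})"

definition gamma :: "real \<Rightarrow> real \<Rightarrow> real" where
  "gamma \<phi> y = y * \<phi> - ln (1 + exp \<phi>)"

definition Kset :: "real \<Rightarrow> real \<Rightarrow> real \<Rightarrow> (real \<times> real \<times> real \<times> real) set" where
  "Kset rm rp E = {(xm, xp, ym, yp).
      0 \<le> ym \<and> ym \<le> rm \<and> rm < rp \<and> rp \<le> yp \<and> yp \<le> 1 \<and>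
      -1 \<le> xm \<and> xm \<le> xp \<and> xp \<le> 1 \<and>
      (1/2) * ((xm + 1) * (gamma (phi_b rm) ym + m0 rm rp) + (1 - xp) * (gamma (phi_b rp) yp + m0 rm rp))
        \<ge> (E + Vbar rm rp) + m0 rm rp \<and>
      (1/2) * ((xm + 1) * (gamma (phi_b rm) ym + M0 rm rp) + (1 - xp) * (gamma (phi_b rp) yp + M0 rm rp))
        \<le> (E + Vbar rm rp) + M0 rm rp}"

definition Ffun :: "real \<Rightarrow> real \<Rightarrow> real \<times> real \<times> real \<times> real \<Rightarrow> real" where
  "Ffun rm rp k = (case k of (xm, xp, ym, yp) \<Rightarrow>
      (1/2) * ((xm + 1) * (- sfun ym + gamma (phi_b rm) ym) + (1 - xp) * (- sfun yp + gamma (phi_b rp) yp)))"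

end

theory Submission
  imports Defs "HOL-Real_Asymp.Real_Asymp"
begin

text \<open>Write \<open>Hsup \<rho>\<close> for \<open>sup\<^sub>\<phi> H(\<rho>, \<phi>)\<close>; the constraint \<open>V\<^sup>-(\<rho>) + S(\<rho>) = E\<close> reads
  \<open>Hsup \<rho> = e\<close> with \<open>e = E + Vbar rm rp\<close>, so \<open>S\<^sup>-(E)\<close> is the largest entropy of a profile at level \<open>e\<close>.
  Since the binary entropy is the Legendre transform of \<open>softplus t = ln (1 + e\<^sup>t)\<close>, \<open>Hsup \<rho>\<close> is at
  most the integral of the pointwise maximum of \<open>(1 - \<rho>) t - softplus t\<close> over the admissible
  potential values, with equality for step profiles (approximate the optimal step potential by
  smooth increasing ones).
  A point of \<open>K(E)\<close> encodes a three-step profile at level \<open>e\<close> whose entropy is \<open>F - e\<close>.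
  Conversely, a profile at level \<open>e\<close> is dominated by such a three-step profile at a level
  \<open>e' \<ge> e\<close>: the zones where \<open>1 - \<rho>\<close> lies below \<open>\<rho>\<^sub>-\<close> or above \<open>\<rho>\<^sub>+\<close> are replaced by their
  averages (Jensen).
  Mixing in the profile of density \<open>1/2\<close>, which has the largest possible entropy, brings the
  level down to \<open>e\<close> without decreasing \<open>F - e\<close>; for levels too low for this, the constant
  profiles are optimal. Hence both suprema agree, and \<open>K(E) \<noteq> {}\<close> exactly when \<open>e\<close> lies in the
  range of \<open>Hsup\<close>, which is an interval with attained endpoints.\<close>

section \<open>Softplus and the binary entropy\<close>

definition softplus :: "real \<Rightarrow> real" where
  "softplus t = ln (1 + exp t)"

lemma one_plus_exp_pos: "0 < 1 + exp (t::real)"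
  by (simp add: add_pos_pos)

lemma softplus_pos: "0 < softplus t"
  unfolding softplus_def by (simp add: add_pos_pos)

lemma softplus_mono: "s \<le> t \<Longrightarrow> softplus s \<le> softplus t"
  unfolding softplus_def by (subst ln_le_cancel_iff) (auto simp: add_pos_pos)

lemma softplus_le_exp: "softplus t \<le> exp t"
  unfolding softplus_def by (rule ln_add_one_self_le_self) simp

lemma softplus_minus: "softplus (- t) = softplus t - t"
proof -
  have "1 + exp t = exp t * (1 + exp (- t))" by (simp add: field_simps exp_minus)
  then have "ln (1 + exp t) = t + ln (1 + exp (- t))"
    using one_plus_exp_pos[of "- t"] by (simp add: ln_mult)
  then show ?thesis unfolding softplus_def by simp
qed

lemma softplus_0: "softplus 0 = ln 2"
  by (simp add: softplus_def)

lemma softplus_measurable [measurable]: "softplus \<in> borel_measurable borel"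
  unfolding softplus_def by measurable

lemma gamma_eq: "gamma \<phi> y = y * \<phi> - softplus \<phi>"
  by (simp add: gamma_def softplus_def)

lemma abs_gamma_le: "0 \<le> u \<Longrightarrow> u \<le> 1 \<Longrightarrow> \<bar>gamma \<phi> u\<bar> \<le> \<bar>\<phi>\<bar> + softplus \<phi>"
  using softplus_pos[of \<phi>] mult_left_le_one_le[of "\<bar>\<phi>\<bar>" u] abs_triangle_ineq4[of "u * \<phi>" "softplus \<phi>"]
  by (simp add: gamma_eq abs_mult)

lemma gamma_measurable [measurable]: "gamma \<phi> \<in> borel_measurable borel"
  unfolding gamma_def by measurable

lemma sfun_0 [simp]: "sfun 0 = 0" and sfun_1 [simp]: "sfun 1 = 0"
  by (simp_all add: sfun_def xlnx_def)

lemma sfun_eq: "0 < u \<Longrightarrow> u < 1 \<Longrightarrow> sfun u = u * ln u + (1 - u) * ln (1 - u)"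
  by (simp add: sfun_def xlnx_def)

lemma sfun_one_minus: "sfun (1 - u) = sfun u"
  by (simp add: sfun_def)

lemma sfun_half: "sfun (1/2) = - ln 2"
  by (simp add: sfun_def xlnx_def ln_div)

lemma sfun_measurable [measurable]: "sfun \<in> borel_measurable borel"
  unfolding sfun_def xlnx_def by measurable

lemma sfun_nonpos: "0 \<le> u \<Longrightarrow> u \<le> 1 \<Longrightarrow> sfun u \<le> 0"
  unfolding sfun_def xlnx_def by (auto intro!: add_nonpos_nonpos mult_nonneg_nonpos)

lemma sfun_continuous_on: "0 < a \<Longrightarrow> b < 1 \<Longrightarrow> continuous_on {a..b} sfun"
proof -
  assume ab: "0 < a" "b < 1"
  have "continuous_on {a..b} (\<lambda>u. u * ln u + (1 - u) * ln (1 - u))"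
    using ab by (intro continuous_intros) auto
  then show ?thesis
    by (rule continuous_on_cong[THEN iffD1, rotated 2]) (use ab in \<open>auto simp: sfun_eq\<close>)
qed

lemma phi_b_less: "0 < a \<Longrightarrow> a < b \<Longrightarrow> b < 1 \<Longrightarrow> phi_b a < phi_b b"
  unfolding phi_b_def by (subst ln_less_cancel_iff) (auto intro!: frac_less)

lemma phi_b_le: "0 < a \<Longrightarrow> a \<le> b \<Longrightarrow> b < 1 \<Longrightarrow> phi_b a \<le> phi_b b"
  using phi_b_less[of a b] by (cases "a = b") auto

lemma phi_b_half: "phi_b (1/2) = 0"
  by (simp add: phi_b_def)

lemma phi_b_neg: "0 < a \<Longrightarrow> a < 1/2 \<Longrightarrow> phi_b a < 0"
  using phi_b_less[of a "1/2"] by (simp add: phi_b_half)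

lemma phi_b_pos: "1/2 < a \<Longrightarrow> a < 1 \<Longrightarrow> 0 < phi_b a"
  using phi_b_less[of "1/2" a] by (simp add: phi_b_half)

text \<open>The binary entropy is the Legendre transform of the softplus function:
  \<open>sfun u = sup\<^sub>t (u t - softplus t)\<close>, the supremum being attained at \<open>t = phi_b u\<close> when
  \<open>0 < u < 1\<close>.\<close>

lemma binary_gibbs:
  assumes u: "0 < u" "u < 1" and p: "0 < p" "p < 1"
  shows "u * ln p + (1 - u) * ln (1 - p) \<le> sfun u"
proof -
  have "u * ln (p / u) \<le> u * (p / u - 1)"
    using u p by (intro mult_left_mono ln_le_minus_one) auto
  then have left: "u * ln p - u * ln u \<le> p - u"
    using u p by (simp add: ln_div right_diff_distrib)
  have "(1 - u) * ln ((1 - p) / (1 - u)) \<le> (1 - u) * ((1 - p) / (1 - u) - 1)"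
    using u p by (intro mult_left_mono ln_le_minus_one) auto
  also have "\<dots> = u - p" using u by (simp add: field_simps)
  finally have right: "(1 - u) * ln (1 - p) - (1 - u) * ln (1 - u) \<le> u - p"
    using u p by (simp add: ln_div right_diff_distrib)
  show ?thesis
    using left right u by (simp add: sfun_eq algebra_simps)
qed

lemma sfun_ge_dual:
  assumes "0 \<le> u" "u \<le> 1"
  shows "u * t - softplus t \<le> sfun u"
proof -
  consider "u = 0" | "u = 1" | "0 < u" "u < 1" using assms by linarith
  then show ?thesis
  proof cases
    case 1
    then show ?thesis using softplus_pos[of t] by simp
  next
    case 2
    have "t \<le> softplus t" using softplus_minus[of t] softplus_pos[of "- t"] by simp
    then show ?thesis using 2 by simp
  next
    case 3
    define p where "p = exp t / (1 + exp t)"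
    have p: "0 < p" "p < 1" unfolding p_def by (auto simp: add_pos_pos)
    have "1 - p = 1 / (1 + exp t)"
      unfolding p_def using one_plus_exp_pos[of t] by (simp add: field_simps)
    then have softplus_t: "softplus t = - ln (1 - p)"
      unfolding softplus_def by (simp add: ln_div add_pos_pos)
    have "exp t = p / (1 - p)"
      unfolding p_def using one_plus_exp_pos[of t] by (simp add: field_simps)
    then have "t = ln (p / (1 - p))" by (metis ln_exp)
    then have t_eq: "t = ln p - ln (1 - p)" using p by (simp add: ln_div)
    have "u * t - softplus t = u * ln p + (1 - u) * ln (1 - p)"
      unfolding softplus_t unfolding t_eq by (simp add: algebra_simps)
    then show ?thesis using binary_gibbs[OF 3 p] by simp
  qed
qed

lemma sfun_eq_dual_phi_b:
  assumes "0 < u" "u < 1"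
  shows "u * phi_b u - softplus (phi_b u) = sfun u"
proof -
  have "1 + exp (phi_b u) = 1 / (1 - u)" using assms by (simp add: phi_b_def field_simps)
  then have "softplus (phi_b u) = - ln (1 - u)"
    using assms by (simp add: softplus_def ln_div)
  then show ?thesis
    using assms by (simp add: sfun_eq phi_b_def ln_div algebra_simps)
qed

lemma gamma_phi_b_self: "0 < r \<Longrightarrow> r < 1 \<Longrightarrow> gamma (phi_b r) r = sfun r"
  by (simp add: gamma_eq sfun_eq_dual_phi_b)

lemma neg_sfun_le_ln2: "0 \<le> u \<Longrightarrow> u \<le> 1 \<Longrightarrow> - sfun u \<le> ln 2"
  using sfun_ge_dual[of u 0] by (simp add: softplus_0)

lemma abs_sfun_le_ln2: "0 \<le> u \<Longrightarrow> u \<le> 1 \<Longrightarrow> \<bar>sfun u\<bar> \<le> ln 2"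
  using sfun_nonpos[of u] neg_sfun_le_ln2[of u] by linarith

text \<open>Conversely \<open>- sfun y = inf\<^sub>t (softplus t - y t)\<close> on all of \<open>[0, 1]\<close>: at the endpoints the
  infimum is approached as \<open>t \<rightarrow> \<mp>\<infinity>\<close>.\<close>

lemma le_neg_sfun_if_dual_bound:
  assumes a: "0 \<le> a" and y: "0 \<le> y" "y \<le> 1"
    and bound: "\<And>t. X \<le> a * (softplus t - y * t)"
  shows "X \<le> a * (- sfun y)"
proof -
  have small: False if X: "0 < X" and t: "X \<le> a * softplus t" "softplus t \<le> X / (2 * (a + 1))" for t
  proof -
    have "X \<le> a * (X / (2 * (a + 1)))" using t a by (meson mult_left_mono order.trans)
    also have "\<dots> = X * (a / (2 * (a + 1)))" by simp
    also have "\<dots> < X * 1" using X a by (intro mult_strict_left_mono) (simp_all add: field_simps)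
    finally show False by simp
  qed
  consider "y = 0" | "y = 1" | "0 < y" "y < 1" using y by linarith
  then show ?thesis
  proof cases
    case 1
    let ?t = "ln (X / (2 * (a + 1)))"
    show ?thesis
      using small[of ?t] bound[of ?t] softplus_le_exp[of ?t] 1 a by (cases "0 < X") auto
  next
    case 2
    let ?t = "- ln (X / (2 * (a + 1)))"
    show ?thesis
      using small[of "- ?t"] bound[of ?t] softplus_le_exp[of "- ?t"] softplus_minus[of ?t] 2 a
      by (cases "0 < X") auto
  next
    case 3
    then show ?thesis
      using bound[of "phi_b y"] sfun_eq_dual_phi_b[of y] by (simp add: algebra_simps)
  qed
qed

lemma sfun_ge_tangent:
  assumes "0 < v" "v < 1" "0 \<le> u" "u \<le> 1"
  shows "sfun v + (u - v) * phi_b v \<le> sfun u"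
  using sfun_ge_dual[of u "phi_b v"] sfun_eq_dual_phi_b[of v] assms by (simp add: algebra_simps)

lemma neg_sfun_le_right:
  assumes "1/2 \<le> v" "v \<le> u" "u \<le> 1"
  shows "- sfun u \<le> - sfun v"
proof (cases "v = u")
  case False
  then have "0 \<le> (u - v) * phi_b v" using assms phi_b_le[of "1/2" v] by (simp add: phi_b_half)
  then show ?thesis
    using sfun_ge_tangent[of v u] False assms by simp
qed simp

lemma neg_sfun_le_left:
  assumes "0 \<le> u" "u \<le> v" "v \<le> 1/2"
  shows "- sfun u \<le> - sfun v"
  using neg_sfun_le_right[of "1 - v" "1 - u"] assms by (simp add: sfun_one_minus)

lemma dual_le_tangent:
  assumes "0 < r" "r < 1" and sign: "(u - r) * (t - phi_b r) \<le> 0"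
  shows "u * t - softplus t \<le> gamma (phi_b r) u"
  using sfun_ge_dual[of r t] gamma_phi_b_self[of r] sign assms
  by (simp add: gamma_eq algebra_simps)

lemma neg_sfun_concave:
  assumes w: "0 \<le> w1" "0 \<le> w2" "0 < w1 + w2"
    and y: "0 \<le> y1" "y1 \<le> 1" "0 \<le> y2" "y2 \<le> 1"
  shows "w1 * - sfun y1 + w2 * - sfun y2 \<le> (w1 + w2) * - sfun ((w1 * y1 + w2 * y2) / (w1 + w2))"
proof (rule le_neg_sfun_if_dual_bound)
  have "w1 * y1 + w2 * y2 \<le> w1 + w2" using w y by (intro add_mono mult_left_le) auto
  then show "0 \<le> (w1 * y1 + w2 * y2) / (w1 + w2)" "(w1 * y1 + w2 * y2) / (w1 + w2) \<le> 1"
    using w y by simp_all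
  fix t
  have "w1 * - sfun y1 \<le> w1 * (softplus t - y1 * t)" "w2 * - sfun y2 \<le> w2 * (softplus t - y2 * t)"
    using sfun_ge_dual[of y1 t] sfun_ge_dual[of y2 t] y w
    by (simp_all only: mult_minus_right[symmetric]) (intro mult_left_mono; simp)+
  moreover have "(w1 + w2) * (softplus t - (w1 * y1 + w2 * y2) / (w1 + w2) * t)
      = w1 * (softplus t - y1 * t) + w2 * (softplus t - y2 * t)"
    using w by (simp add: field_simps)
  ultimately show "w1 * - sfun y1 + w2 * - sfun y2
      \<le> (w1 + w2) * (softplus t - (w1 * y1 + w2 * y2) / (w1 + w2) * t)"
    by linarith
qed (use w in simp)

section \<open>Integration over \<open>[-1, 1]\<close>\<close>

abbreviation leb :: "real measure" where
  "leb \<equiv> lebesgue_on {-1..1}"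

lemma measurable_leb_of_borel: "f \<in> borel_measurable borel \<Longrightarrow> f \<in> borel_measurable leb"
  by (intro measurable_restrict_space1 measurable_completion) simp

lemma finite_measure_leb: "finite_measure leb"
  by (rule finite_measure_lebesgue_on) (simp add: lmeasurable_cbox[where a="-1" and b=1, simplified])

lemma integrable_leb_bounded:
  fixes f :: "real \<Rightarrow> real"
  assumes "f \<in> borel_measurable leb" "\<And>x. x \<in> {-1..1} \<Longrightarrow> \<bar>f x\<bar> \<le> B"
  shows "integrable leb f"
  by (rule finite_measure.integrable_const_bound[OF finite_measure_leb, where B=B]) (use assms in auto)

lemma measure_leb_Icc: "-1 \<le> a \<Longrightarrow> a \<le> b \<Longrightarrow> b \<le> 1 \<Longrightarrow> measure leb {a..b} = b - a"
  by (subst measure_restrict_space) auto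

lemma measure_leb_space [simp]: "measure leb {-1..1} = 2"
  using measure_leb_Icc[of "-1" 1] by simp

lemma AE_leb_neq: "AE x in leb. x \<noteq> a"
proof (rule AE_I'[of "{a} \<inter> {-1..1}"])
  show "{a} \<inter> {-1..1} \<in> null_sets leb"
    by (subst null_sets_restrict_space)
       (auto simp: negligible_iff_null_sets[symmetric] intro: negligible_finite)
qed auto

definition step3 :: "real \<Rightarrow> real \<Rightarrow> real \<Rightarrow> real \<Rightarrow> real \<Rightarrow> real \<Rightarrow> real" where
  "step3 a b c z1 z2 x = (if x < z1 then a else if x < z2 then b else c)"

lemma step3_measurable [measurable]: "step3 a b c z1 z2 \<in> borel_measurable borel"
  unfolding step3_def by measurable

lemma integral_leb_step3:
  assumes "-1 \<le> z1" "z1 \<le> z2" "z2 \<le> 1"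
  shows "integral\<^sup>L leb (step3 c1 c2 c3 z1 z2) = (z1 + 1) * c1 + (z2 - z1) * c2 + (1 - z2) * c3"
proof -
  let ?f = "\<lambda>x. c1 * indicator {-1..z1} x + c2 * indicator {z1..z2} x + c3 * indicator {z2..1} x"
  have integrable: "integrable leb (indicator {a..b} :: real \<Rightarrow> real)"
    if "-1 \<le> a" "a \<le> b" "b \<le> 1" for a b
    using that by (intro integrable_real_indicator)
      (auto simp: sets_restrict_space_iff emeasure_restrict_space)
  have "AE x in leb. step3 c1 c2 c3 z1 z2 x = ?f x"
    using AE_leb_neq[of z1] AE_leb_neq[of z2] AE_space[of leb]
    by eventually_elim (use assms in \<open>auto simp: indicator_def step3_def\<close>)
  then have "integral\<^sup>L leb (step3 c1 c2 c3 z1 z2) = integral\<^sup>L leb ?f"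
    by (intro integral_cong_AE) (auto intro!: measurable_leb_of_borel)
  also have "\<dots> = c1 * measure leb {-1..z1} + c2 * measure leb {z1..z2} + c3 * measure leb {z2..1}"
    using integrable[of "-1" z1] integrable[of z1 z2] integrable[of z2 1] assms by simp
  finally show ?thesis
    using assms by (simp add: measure_leb_Icc algebra_simps)
qed

lemma integrable_zone:
  fixes w u :: "real \<Rightarrow> real"
  assumes [measurable]: "w \<in> borel_measurable leb" "u \<in> borel_measurable leb"
    and w: "\<And>x. x \<in> {-1..1} \<Longrightarrow> 0 \<le> w x \<and> w x \<le> 1"
    and u: "\<And>x. x \<in> {-1..1} \<Longrightarrow> 0 \<le> u x \<and> u x \<le> 1"
  shows "integrable leb w" "integrable leb (\<lambda>x. w x * u x)"
    "integrable leb (\<lambda>x. w x * sfun (u x))" "integrable leb (\<lambda>x. w x * gamma \<phi> (u x))"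
proof -
  have *: "integrable leb (\<lambda>x. w x * f (u x))"
    if [measurable]: "f \<in> borel_measurable borel" and f: "\<And>r. 0 \<le> r \<Longrightarrow> r \<le> 1 \<Longrightarrow> \<bar>f r\<bar> \<le> B"
    for f and B :: real
  proof (rule integrable_leb_bounded[where B="\<bar>B\<bar>"])
    show "(\<lambda>x. w x * f (u x)) \<in> borel_measurable leb" by measurable
    fix x :: real assume "x \<in> {-1..1}"
    then have "\<bar>w x\<bar> * \<bar>f (u x)\<bar> \<le> 1 * \<bar>B\<bar>"
      using w u f by (intro mult_mono) force+
    then show "\<bar>w x * f (u x)\<bar> \<le> \<bar>B\<bar>" by (simp add: abs_mult)
  qed
  show "integrable leb w" "integrable leb (\<lambda>x. w x * u x)"
    "integrable leb (\<lambda>x. w x * sfun (u x))" "integrable leb (\<lambda>x. w x * gamma \<phi> (u x))"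
    using *[of "\<lambda>_. 1" 1] *[of "\<lambda>r. r" 1] *[of sfun "ln 2"] *[of "gamma \<phi>" "\<bar>\<phi>\<bar> + softplus \<phi>"]
    by (auto simp: abs_sfun_le_ln2 abs_gamma_le)
qed

lemma integral_neg_sfun_le_mean:
  fixes w u :: "real \<Rightarrow> real"
  assumes [measurable]: "w \<in> borel_measurable leb" "u \<in> borel_measurable leb"
    and w: "\<And>x. x \<in> {-1..1} \<Longrightarrow> 0 \<le> w x \<and> w x \<le> 1"
    and u: "\<And>x. x \<in> {-1..1} \<Longrightarrow> 0 \<le> u x \<and> u x \<le> 1"
    and y: "0 \<le> y" "y \<le> 1" and mean: "integral\<^sup>L leb w * y = integral\<^sup>L leb (\<lambda>x. w x * u x)"
  shows "integral\<^sup>L leb (\<lambda>x. w x * - sfun (u x)) \<le> integral\<^sup>L leb w * - sfun y"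
proof (rule le_neg_sfun_if_dual_bound[OF _ y])
  have [simp]: "integrable leb w" "integrable leb (\<lambda>x. w x * u x)" "integrable leb (\<lambda>x. w x * sfun (u x))"
    using integrable_zone[OF assms(1-4)] by simp_all
  show "0 \<le> integral\<^sup>L leb w"
    using w by (intro Bochner_Integration.integral_nonneg) auto
  fix t
  have "integral\<^sup>L leb (\<lambda>x. w x * - sfun (u x)) \<le> integral\<^sup>L leb (\<lambda>x. softplus t * w x - t * (w x * u x))"
  proof (rule integral_mono)
    fix x assume "x \<in> space leb"
    then show "w x * - sfun (u x) \<le> softplus t * w x - t * (w x * u x)"
      using sfun_ge_dual[of "u x" t] w[of x] u[of x] mult_left_mono[of "u x * t - softplus t" "sfun (u x)" "w x"]
      by (simp add: algebra_simps)
  qed simp_all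
  also have "\<dots> = softplus t * integral\<^sup>L leb w - t * integral\<^sup>L leb (\<lambda>x. w x * u x)"
    by simp
  also have "\<dots> = integral\<^sup>L leb w * (softplus t - y * t)"
    unfolding mean[symmetric] by (simp add: algebra_simps)
  finally show "integral\<^sup>L leb (\<lambda>x. w x * - sfun (u x)) \<le> integral\<^sup>L leb w * (softplus t - y * t)" .
qed

lemma weighted_mean_exists:
  fixes w u :: "real \<Rightarrow> real"
  assumes [measurable]: "w \<in> borel_measurable leb" "u \<in> borel_measurable leb"
    and w: "\<And>x. x \<in> {-1..1} \<Longrightarrow> 0 \<le> w x \<and> w x \<le> 1"
    and u: "\<And>x. x \<in> {-1..1} \<Longrightarrow> 0 \<le> u x \<and> u x \<le> 1"
    and on_support: "\<And>x. x \<in> {-1..1} \<Longrightarrow> w x \<noteq> 0 \<Longrightarrow> lo \<le> u x \<and> u x \<le> hi" and "lo \<le> hi"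
  obtains y where "lo \<le> y" "y \<le> hi" "integral\<^sup>L leb w * y = integral\<^sup>L leb (\<lambda>x. w x * u x)"
proof -
  have [simp]: "integrable leb w" "integrable leb (\<lambda>x. w x * u x)"
    using integrable_zone[OF assms(1-4)] by simp_all
  have pointwise: "lo * w x \<le> w x * u x \<and> w x * u x \<le> hi * w x" if "x \<in> {-1..1}" for x
    using w[OF that] on_support[OF that] by (cases "w x = 0") (auto simp: mult.commute intro: mult_left_mono)
  have "integral\<^sup>L leb (\<lambda>x. lo * w x) \<le> integral\<^sup>L leb (\<lambda>x. w x * u x)"
    using pointwise by (intro integral_mono) auto
  then have lo: "lo * integral\<^sup>L leb w \<le> integral\<^sup>L leb (\<lambda>x. w x * u x)" by simp
  have "integral\<^sup>L leb (\<lambda>x. w x * u x) \<le> integral\<^sup>L leb (\<lambda>x. hi * w x)"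
    using pointwise by (intro integral_mono) auto
  then have hi: "integral\<^sup>L leb (\<lambda>x. w x * u x) \<le> hi * integral\<^sup>L leb w" by simp
  show ?thesis
  proof (cases "integral\<^sup>L leb w = 0")
    case True
    with lo hi show ?thesis by (intro that[of lo]) (use \<open>lo \<le> hi\<close> in auto)
  next
    case False
    moreover have "0 \<le> integral\<^sup>L leb w"
      using w by (intro Bochner_Integration.integral_nonneg) auto
    ultimately have "0 < integral\<^sup>L leb w" by simp
    with lo hi show ?thesis
      by (intro that[of "integral\<^sup>L leb (\<lambda>x. w x * u x) / integral\<^sup>L leb w"])
        (auto simp: field_simps)
  qed
qed

lemma zone_average:
  fixes w u :: "real \<Rightarrow> real"
  assumes [measurable]: "w \<in> borel_measurable leb" "u \<in> borel_measurable leb"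
    and w: "\<And>x. x \<in> {-1..1} \<Longrightarrow> 0 \<le> w x \<and> w x \<le> 1"
    and u: "\<And>x. x \<in> {-1..1} \<Longrightarrow> 0 \<le> u x \<and> u x \<le> 1"
    and on_support: "\<And>x. x \<in> {-1..1} \<Longrightarrow> w x \<noteq> 0 \<Longrightarrow> lo \<le> u x \<and> u x \<le> hi"
    and "0 \<le> lo" "lo \<le> hi" "hi \<le> 1"
  obtains y where "lo \<le> y" "y \<le> hi"
    "\<And>\<phi>. integral\<^sup>L leb (\<lambda>x. w x * gamma \<phi> (u x)) = integral\<^sup>L leb w * gamma \<phi> y"
    "integral\<^sup>L leb (\<lambda>x. w x * - sfun (u x)) \<le> integral\<^sup>L leb w * - sfun y"
proof -
  obtain y where y: "lo \<le> y" "y \<le> hi" and mean: "integral\<^sup>L leb w * y = integral\<^sup>L leb (\<lambda>x. w x * u x)"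
    using weighted_mean_exists[OF assms(1-5) \<open>lo \<le> hi\<close>] by blast
  have [simp]: "integrable leb w" "integrable leb (\<lambda>x. w x * u x)"
    using integrable_zone[OF assms(1-4)] by simp_all
  have "integral\<^sup>L leb (\<lambda>x. w x * gamma \<phi> (u x)) = integral\<^sup>L leb w * gamma \<phi> y" for \<phi>
  proof -
    have "integral\<^sup>L leb (\<lambda>x. w x * gamma \<phi> (u x))
        = integral\<^sup>L leb (\<lambda>x. \<phi> * (w x * u x) - softplus \<phi> * w x)"
      by (simp add: gamma_eq algebra_simps)
    also have "\<dots> = \<phi> * integral\<^sup>L leb (\<lambda>x. w x * u x) - softplus \<phi> * integral\<^sup>L leb w"
      by simp
    also have "\<dots> = integral\<^sup>L leb w * gamma \<phi> y"
      unfolding mean[symmetric] by (simp add: gamma_eq algebra_simps)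
    finally show ?thesis .
  qed
  moreover have "integral\<^sup>L leb (\<lambda>x. w x * - sfun (u x)) \<le> integral\<^sup>L leb w * - sfun y"
    using y assms by (intro integral_neg_sfun_le_mean[OF _ _ w u _ _ mean]) auto
  ultimately show ?thesis using that y by blast
qed

lemma Mset_measurable [measurable_dest]: "\<rho> \<in> Mset \<Longrightarrow> \<rho> \<in> borel_measurable leb"
  by (simp add: Mset_def)

lemma Mset_range: "\<rho> \<in> Mset \<Longrightarrow> x \<in> {-1..1} \<Longrightarrow> 0 \<le> \<rho> x \<and> \<rho> x \<le> 1"
  by (simp add: Mset_def)

lemma Mset_integrable:
  fixes f :: "real \<Rightarrow> real"
  assumes "\<rho> \<in> Mset" "f \<in> borel_measurable borel" "\<And>r. 0 \<le> r \<Longrightarrow> r \<le> 1 \<Longrightarrow> \<bar>f r\<bar> \<le> B"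
  shows "integrable leb (\<lambda>x. f (\<rho> x))"
  by (rule integrable_leb_bounded[where B=B]) (use assms Mset_range in auto)

section \<open>Admissible potentials\<close>

lemma Fset_derivative:
  assumes "\<phi> \<in> Fset rm rp"
  obtains \<phi>' where "\<And>x. x \<in> {-1..1} \<Longrightarrow> (\<phi> has_real_derivative \<phi>' x) (at x within {-1..1})"
    "\<And>x. x \<in> {-1..1} \<Longrightarrow> 0 < \<phi>' x"
  using assms unfolding Fset_def by blast

lemma Fset_continuous_on: "\<phi> \<in> Fset rm rp \<Longrightarrow> continuous_on {-1..1} \<phi>"
  unfolding continuous_on_eq_continuous_within
  by (metis Fset_derivative has_derivative_continuous has_field_derivative_imp_has_derivative)

lemma Fset_measurable [measurable_dest]: "\<phi> \<in> Fset rm rp \<Longrightarrow> \<phi> \<in> borel_measurable leb"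
  by (rule continuous_imp_measurable_on_sets_lebesgue[OF Fset_continuous_on]) auto

lemma Fset_mono:
  assumes "\<phi> \<in> Fset rm rp" "-1 \<le> x" "x \<le> y" "y \<le> 1"
  shows "\<phi> x \<le> \<phi> y"
proof (rule DERIV_nonneg_imp_increasing_open[OF assms(3)])
  obtain \<phi>' where d: "\<And>x. x \<in> {-1..1} \<Longrightarrow> (\<phi> has_real_derivative \<phi>' x) (at x within {-1..1})"
    and pos: "\<And>x. x \<in> {-1..1} \<Longrightarrow> 0 < \<phi>' x"
    using Fset_derivative[OF assms(1)] by blast
  fix z assume z: "x < z" "z < y"
  then have "at z within {-1..1} = at z" using assms by (intro at_within_Icc_at) auto
  then show "\<exists>d. (\<phi> has_real_derivative d) (at z) \<and> 0 \<le> d"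
    using d[of z] pos[of z] z assms by (intro exI[of _ "\<phi>' z"]) auto
next
  show "continuous_on {x..y} \<phi>"
    using Fset_continuous_on[OF assms(1)] by (rule continuous_on_subset) (use assms in auto)
qed

lemma Fset_range:
  assumes "\<phi> \<in> Fset rm rp" "x \<in> {-1..1}"
  shows "phi_b rm \<le> \<phi> x \<and> \<phi> x \<le> phi_b rp"
  using assms Fset_mono[OF assms(1), of "-1" x] Fset_mono[OF assms(1), of x 1]
  by (auto simp: Fset_def)

definition rescale :: "real \<Rightarrow> real \<Rightarrow> (real \<Rightarrow> real) \<Rightarrow> real \<Rightarrow> real" where
  "rescale a b g x = a + (b - a) * ((g x - g (-1)) / (g 1 - g (-1)))"

lemma rescale_in_Fset:
  fixes g g' :: "real \<Rightarrow> real"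
  assumes "phi_b rm < phi_b rp" and g: "\<And>x. (g has_real_derivative g' x) (at x)"
    and "continuous_on UNIV g'" and g'_pos: "\<And>x. 0 < g' x"
  shows "rescale (phi_b rm) (phi_b rp) g \<in> Fset rm rp"
proof -
  have "g (-1) < g 1"
  proof (rule DERIV_pos_imp_increasing[of "-1" 1 g])
    fix x show "\<exists>y. (g has_real_derivative y) (at x) \<and> 0 < y" using g g'_pos by blast
  qed simp
  then have D: "0 < g 1 - g (-1)" by simp
  let ?\<phi>' = "\<lambda>x. (phi_b rp - phi_b rm) * (g' x / (g 1 - g (-1)))"
  have "(rescale (phi_b rm) (phi_b rp) g has_real_derivative ?\<phi>' x) (at x)" for x
  proof -
    have "((\<lambda>x. (g x - g (-1)) / (g 1 - g (-1))) has_real_derivative (g' x - 0) / (g 1 - g (-1))) (at x)"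
      by (intro DERIV_cdivide DERIV_diff g DERIV_const)
    then show ?thesis
      unfolding rescale_def using DERIV_add[OF DERIV_const DERIV_cmult] by fastforce
  qed
  moreover have "continuous_on {-1..1} ?\<phi>'"
    by (intro continuous_intros continuous_on_subset[OF assms(3)]) (use D in auto)
  moreover have "0 < ?\<phi>' x" for x using assms(1) D g'_pos[of x] by simp
  moreover have "rescale (phi_b rm) (phi_b rp) g (-1) = phi_b rm" "rescale (phi_b rm) (phi_b rp) g 1 = phi_b rp"
    using D by (simp_all add: rescale_def)
  ultimately show ?thesis
    unfolding Fset_def by (blast intro: has_field_derivative_at_within)
qed

text \<open>The term \<open>(n + 1) z\<close> makes \<open>ramp n z x\<close> tend to \<open>\<plusminus>\<pi>/2\<close> also for \<open>x = z = \<plusminus>1\<close>, so that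
  the normalisation in \<open>rescale\<close> converges.\<close>

definition ramp :: "nat \<Rightarrow> real \<Rightarrow> real \<Rightarrow> real" where
  "ramp n z x = arctan ((real n + 1)^2 * (x - z) + (real n + 1) * z)"

definition ramp_limit :: "real \<Rightarrow> real \<Rightarrow> real" where
  "ramp_limit z x = (if z < x \<or> x = 1 then pi/2 else - (pi/2))"

lemma ramp_tendsto:
  assumes "z \<le> 1" "x \<noteq> z \<or> x = 1 \<or> x = -1"
  shows "(\<lambda>n. ramp n z x) \<longlonglongrightarrow> ramp_limit z x"
proof -
  consider "0 < x - z" | "x - z < 0" | "x = z" "x = 1" | "x = z" "x = -1" "x \<noteq> 1"
    using assms by fastforce
  then show ?thesis
  proof cases
    case 1
    then have "z < x" by simp
    with 1 show ?thesis unfolding ramp_def ramp_limit_def by simp real_asymp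
  next
    case 2
    then have "\<not> (z < x \<or> x = 1)" using assms(1) by auto
    with 2 show ?thesis unfolding ramp_def ramp_limit_def by simp real_asymp
  next
    case 3
    then show ?thesis unfolding ramp_def ramp_limit_def by simp real_asymp
  next
    case 4
    then show ?thesis unfolding ramp_def ramp_limit_def by simp real_asymp
  qed
qed

lemma ramp_has_derivative:
  "(ramp n z has_real_derivative (real n + 1)^2 / (1 + ((real n + 1)^2 * (x - z) + (real n + 1) * z)^2)) (at x)"
  unfolding ramp_def by (auto intro!: derivative_eq_intros simp: divide_inverse)

definition smooth_step3 :: "real \<Rightarrow> real \<Rightarrow> real \<Rightarrow> real \<Rightarrow> real \<Rightarrow> nat \<Rightarrow> real \<Rightarrow> real" where
  "smooth_step3 a b c z1 z2 n x = (b - a) * ramp n z1 x + (c - b) * ramp n z2 x"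

lemma rescale_smooth_step3_tendsto:
  assumes "a < c" "-1 \<le> z1" "z1 \<le> z2" "z2 \<le> 1" "-1 \<le> x" "x \<le> 1" "x \<noteq> z1" "x \<noteq> z2"
  shows "(\<lambda>n. rescale a c (smooth_step3 a b c z1 z2 n) x) \<longlonglongrightarrow> step3 a b c z1 z2 x"
proof -
  let ?G = "\<lambda>x. (b - a) * ramp_limit z1 x + (c - b) * ramp_limit z2 x"
  have G: "(\<lambda>n. smooth_step3 a b c z1 z2 n y) \<longlonglongrightarrow> ?G y"
    if "y = x \<or> y = 1 \<or> y = -1" for y
    unfolding smooth_step3_def using that assms by (intro tendsto_intros ramp_tendsto) auto
  have G_ends: "?G 1 - ?G (-1) = (c - a) * pi"
    using assms by (simp add: ramp_limit_def algebra_simps)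
  have "(\<lambda>n. rescale a c (smooth_step3 a b c z1 z2 n) x) \<longlonglongrightarrow> a + (c - a) * ((?G x - ?G (-1)) / (?G 1 - ?G (-1)))"
    unfolding rescale_def using assms G_ends by (intro tendsto_intros G) auto
  also have "a + (c - a) * ((?G x - ?G (-1)) / (?G 1 - ?G (-1))) = step3 a b c z1 z2 x"
    using assms unfolding G_ends by (auto simp: ramp_limit_def step3_def field_simps)
  finally show ?thesis .
qed

lemma one_plus_square_pos: "0 < 1 + (w::real)^2"
  by (simp add: add_pos_nonneg)

definition Hbound :: "real \<Rightarrow> real \<Rightarrow> real" where
  "Hbound rm rp = \<bar>phi_b rm\<bar> + \<bar>phi_b rp\<bar> + softplus (phi_b rp)"

lemma Hdensity_bound:
  assumes "0 \<le> r" "r \<le> 1" "phi_b rm \<le> t" "t \<le> phi_b rp"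
  shows "\<bar>(1 - r) * t - softplus t\<bar> \<le> Hbound rm rp"
proof -
  have "\<bar>(1 - r) * t\<bar> \<le> 1 * (\<bar>phi_b rm\<bar> + \<bar>phi_b rp\<bar>)"
    unfolding abs_mult using assms by (intro mult_mono) auto
  moreover have "\<bar>softplus t\<bar> \<le> softplus (phi_b rp)"
    using softplus_pos[of t] softplus_mono[OF assms(4)] by simp
  ultimately show ?thesis
    unfolding Hbound_def using abs_triangle_ineq4[of "(1 - r) * t" "softplus t"] by argo
qed

lemma HH_eq: "HH \<rho> \<phi> = (1/2) * integral\<^sup>L leb (\<lambda>x. (1 - \<rho> x) * \<phi> x - softplus (\<phi> x))"
  by (simp add: HH_def softplus_def)

lemma HH_integrable:
  assumes "\<rho> \<in> Mset" "\<phi> \<in> Fset rm rp"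
  shows "integrable leb (\<lambda>x. (1 - \<rho> x) * \<phi> x - softplus (\<phi> x))"
  by (rule integrable_leb_bounded[where B="Hbound rm rp"])
    (use assms Mset_range Fset_range Hdensity_bound in auto)

definition Hsup :: "real \<Rightarrow> real \<Rightarrow> (real \<Rightarrow> real) \<Rightarrow> real" where
  "Hsup rm rp \<rho> = Sup (HH \<rho> ` Fset rm rp)"

lemma Vminus_add_SS: "Vminus rm rp \<rho> + SS \<rho> = Hsup rm rp \<rho> - Vbar rm rp"
  by (simp add: Vminus_def Hsup_def)

locale boundary_densities =
  fixes rm rp :: real
  assumes rm_pos: "0 < rm" and rm_less_rp: "rm < rp" and rp_less_1: "rp < 1"
begin

lemma phi_b_rm_less_rp: "phi_b rm < phi_b rp"
  using phi_b_less rm_pos rm_less_rp rp_less_1 by blast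

lemma Fset_nonempty: "Fset rm rp \<noteq> {}"
  using rescale_in_Fset[OF phi_b_rm_less_rp, of "\<lambda>x. x" "\<lambda>_. 1"] by auto

lemma HH_le_Hbound:
  assumes "\<rho> \<in> Mset" "\<phi> \<in> Fset rm rp"
  shows "HH \<rho> \<phi> \<le> Hbound rm rp"
proof -
  have "integral\<^sup>L leb (\<lambda>x. (1 - \<rho> x) * \<phi> x - softplus (\<phi> x)) \<le> integral\<^sup>L leb (\<lambda>x. Hbound rm rp)"
    using assms Mset_range Fset_range Hdensity_bound
    by (intro integral_mono HH_integrable) (auto simp: abs_le_iff)
  then show ?thesis unfolding HH_eq by simp
qed

lemma HH_le_Hsup: "\<rho> \<in> Mset \<Longrightarrow> \<phi> \<in> Fset rm rp \<Longrightarrow> HH \<rho> \<phi> \<le> Hsup rm rp \<rho>"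
  unfolding Hsup_def by (intro cSup_upper bdd_aboveI2[where M="Hbound rm rp"] HH_le_Hbound) auto

lemma Hsup_le_half_integral:
  assumes \<rho>: "\<rho> \<in> Mset" and "integrable leb g"
    and bound: "\<And>x t. x \<in> {-1..1} \<Longrightarrow> phi_b rm \<le> t \<Longrightarrow> t \<le> phi_b rp \<Longrightarrow> (1 - \<rho> x) * t - softplus t \<le> g x"
  shows "Hsup rm rp \<rho> \<le> (1/2) * integral\<^sup>L leb g"
  unfolding Hsup_def
proof (rule cSup_least)
  fix h assume "h \<in> HH \<rho> ` Fset rm rp"
  then obtain \<phi> where \<phi>: "\<phi> \<in> Fset rm rp" and h: "h = HH \<rho> \<phi>" by blast
  have "integral\<^sup>L leb (\<lambda>x. (1 - \<rho> x) * \<phi> x - softplus (\<phi> x)) \<le> integral\<^sup>L leb g"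
    using bound Fset_range[OF \<phi>] by (intro integral_mono HH_integrable[OF \<rho> \<phi>] assms(2)) auto
  then show "h \<le> (1/2) * integral\<^sup>L leb g" unfolding h HH_eq by simp
qed (use Fset_nonempty in auto)

lemma rescale_smooth_step3_in_Fset:
  assumes "phi_b rm \<le> m" "m \<le> phi_b rp"
  shows "rescale (phi_b rm) (phi_b rp) (smooth_step3 (phi_b rm) m (phi_b rp) z1 z2 n) \<in> Fset rm rp"
proof (rule rescale_in_Fset[OF phi_b_rm_less_rp])
  let ?d = "\<lambda>z x. (real n + 1)^2 / (1 + ((real n + 1)^2 * (x - z) + (real n + 1) * z)^2)"
  have d_pos: "0 < ?d z x" for z x by (simp add: one_plus_square_pos)
  show "(smooth_step3 (phi_b rm) m (phi_b rp) z1 z2 n has_real_derivative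
      (m - phi_b rm) * ?d z1 x + (phi_b rp - m) * ?d z2 x) (at x)" for x
    unfolding smooth_step3_def by (intro DERIV_add DERIV_cmult ramp_has_derivative)
  show "continuous_on UNIV (\<lambda>x. (m - phi_b rm) * ?d z1 x + (phi_b rp - m) * ?d z2 x)"
    using one_plus_square_pos by (intro continuous_intros) (metis less_irrefl)+
  show "0 < (m - phi_b rm) * ?d z1 x + (phi_b rp - m) * ?d z2 x" for x
  proof (cases "phi_b rm < m")
    case True
    then show ?thesis
      using assms by (intro add_pos_nonneg mult_pos_pos mult_nonneg_nonneg d_pos less_imp_le[OF d_pos]) auto
  next
    case False
    then show ?thesis
      using assms phi_b_rm_less_rp by (intro add_nonneg_pos mult_pos_pos mult_nonneg_nonneg d_pos less_imp_le[OF d_pos]) auto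
  qed
qed

text \<open>Lower bounds on \<open>Hsup\<close> come from potentials that are step functions: such a step function
  is not admissible, but it is the almost everywhere limit of the admissible potentials
  \<open>rescale \<dots> (smooth_step3 \<dots> n)\<close>, and dominated convergence passes to the limit in \<open>HH\<close>.\<close>

lemma Hsup_ge_step3:
  assumes \<rho>: "\<rho> \<in> Mset" and z: "-1 \<le> z1" "z1 \<le> z2" "z2 \<le> 1" and m: "phi_b rm \<le> m" "m \<le> phi_b rp"
  defines "T \<equiv> step3 (phi_b rm) m (phi_b rp) z1 z2"
  shows "(1/2) * integral\<^sup>L leb (\<lambda>x. (1 - \<rho> x) * T x - softplus (T x)) \<le> Hsup rm rp \<rho>"
proof -
  define \<phi> where "\<phi> n = rescale (phi_b rm) (phi_b rp) (smooth_step3 (phi_b rm) m (phi_b rp) z1 z2 n)" for n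
  have \<phi>: "\<phi> n \<in> Fset rm rp" for n
    unfolding \<phi>_def by (rule rescale_smooth_step3_in_Fset[OF m])
  have [measurable]: "\<rho> \<in> borel_measurable leb" "T \<in> borel_measurable leb"
    using \<rho> unfolding T_def by (auto intro: measurable_leb_of_borel)
  have "(\<lambda>n. integral\<^sup>L leb (\<lambda>x. (1 - \<rho> x) * \<phi> n x - softplus (\<phi> n x)))
      \<longlonglongrightarrow> integral\<^sup>L leb (\<lambda>x. (1 - \<rho> x) * T x - softplus (T x))"
  proof (rule integral_dominated_convergence[where w="\<lambda>_. Hbound rm rp"])
    show "(\<lambda>x. (1 - \<rho> x) * \<phi> n x - softplus (\<phi> n x)) \<in> borel_measurable leb" for n
      using HH_integrable[OF \<rho> \<phi>] by blast
    have "AE x in leb. x \<noteq> z1 \<and> x \<noteq> z2 \<and> x \<in> {-1..1}"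
      using AE_leb_neq[of z1] AE_leb_neq[of z2] AE_space[of leb] by eventually_elim auto
    then show "AE x in leb. (\<lambda>n. (1 - \<rho> x) * \<phi> n x - softplus (\<phi> n x))
        \<longlonglongrightarrow> (1 - \<rho> x) * T x - softplus (T x)"
    proof eventually_elim
      case (elim x)
      have "(\<lambda>n. \<phi> n x) \<longlonglongrightarrow> T x"
        unfolding \<phi>_def T_def using phi_b_rm_less_rp z elim
        by (intro rescale_smooth_step3_tendsto) auto
      then show ?case
        unfolding softplus_def using one_plus_exp_pos[of "T x"] by (intro tendsto_intros) auto
    qed
    show "AE x in leb. norm ((1 - \<rho> x) * \<phi> n x - softplus (\<phi> n x)) \<le> Hbound rm rp" for n
      using Mset_range[OF \<rho>] Fset_range[OF \<phi>] Hdensity_bound by (intro AE_I2) auto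
  qed simp_all
  then have "(\<lambda>n. HH \<rho> (\<phi> n)) \<longlonglongrightarrow> (1/2) * integral\<^sup>L leb (\<lambda>x. (1 - \<rho> x) * T x - softplus (T x))"
    unfolding HH_eq by (intro tendsto_intros)
  then show ?thesis
    by (rule LIMSEQ_le_const2) (use HH_le_Hsup[OF \<rho> \<phi>] in auto)
qed

lemma neg_sfun_continuous_on: "continuous_on {rm..rp} (\<lambda>u. - sfun u)"
  using sfun_continuous_on rm_pos rp_less_1 by (intro continuous_intros) auto

lemma m0_le_neg_sfun: "u \<in> {rm..rp} \<Longrightarrow> m0 rm rp \<le> - sfun u"
  and neg_sfun_le_M0: "u \<in> {rm..rp} \<Longrightarrow> - sfun u \<le> M0 rm rp"
proof -
  have "bounded ((\<lambda>u. - sfun u) ` {rm..rp})"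
    by (intro compact_imp_bounded compact_continuous_image neg_sfun_continuous_on) simp
  then show "u \<in> {rm..rp} \<Longrightarrow> m0 rm rp \<le> - sfun u" "u \<in> {rm..rp} \<Longrightarrow> - sfun u \<le> M0 rm rp"
    unfolding m0_def M0_def by (auto intro!: cInf_lower cSup_upper bounded_imp_bdd_below bounded_imp_bdd_above)
qed

lemma m0_attained: "\<exists>u\<in>{rm..rp}. - sfun u = m0 rm rp"
proof -
  obtain u where u: "u \<in> {rm..rp}" "\<And>y. y \<in> {rm..rp} \<Longrightarrow> - sfun u \<le> - sfun y"
    using continuous_attains_inf[OF _ _ neg_sfun_continuous_on] rm_less_rp by fastforce
  then have "m0 rm rp = - sfun u" unfolding m0_def by (intro cInf_eq_minimum) auto
  with u show ?thesis by auto
qed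

lemma M0_attained: "\<exists>u\<in>{rm..rp}. - sfun u = M0 rm rp"
proof -
  obtain u where u: "u \<in> {rm..rp}" "\<And>y. y \<in> {rm..rp} \<Longrightarrow> - sfun y \<le> - sfun u"
    using continuous_attains_sup[OF _ _ neg_sfun_continuous_on] rm_less_rp by fastforce
  then have "M0 rm rp = - sfun u" unfolding M0_def by (intro cSup_eq_maximum) auto
  with u show ?thesis by auto
qed

lemma m0_le_M0: "m0 rm rp \<le> M0 rm rp"
  using m0_le_neg_sfun[of rm] neg_sfun_le_M0[of rm] rm_less_rp by auto

lemma M0_le_ln2: "M0 rm rp \<le> ln 2"
proof -
  obtain u where "u \<in> {rm..rp}" "- sfun u = M0 rm rp" using M0_attained by blast
  then show ?thesis using neg_sfun_le_ln2[of u] rm_pos rp_less_1 by auto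
qed

lemma M0_eq_ln2: "rm \<le> 1/2 \<Longrightarrow> 1/2 \<le> rp \<Longrightarrow> M0 rm rp = ln 2"
  using neg_sfun_le_M0[of "1/2"] M0_le_ln2 by (simp add: sfun_half)

lemma sfun_attains_between:
  assumes "- M0 rm rp \<le> y" "y \<le> - m0 rm rp"
  obtains w where "w \<in> {rm..rp}" "sfun w = y"
proof -
  obtain u1 u2 where u: "u1 \<in> {rm..rp}" "- sfun u1 = m0 rm rp" "u2 \<in> {rm..rp}" "- sfun u2 = M0 rm rp"
    using m0_attained M0_attained by blast
  then have "closed_segment u1 u2 \<subseteq> {rm..rp}"
    by (auto simp: closed_segment_eq_real_ivl)
  moreover have "continuous_on {rm..rp} sfun"
    using sfun_continuous_on rm_pos rp_less_1 by blast
  moreover have "y \<in> closed_segment (sfun u1) (sfun u2)"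
    using assms u by (auto simp: closed_segment_eq_real_ivl)
  ultimately show ?thesis
    using IVT'_closed_segment_real[of y sfun u1 u2] continuous_on_subset that by blast
qed

lemma integral_middle_zone:
  fixes w u :: "real \<Rightarrow> real"
  assumes [measurable]: "w \<in> borel_measurable leb" "u \<in> borel_measurable leb"
    and w: "\<And>x. x \<in> {-1..1} \<Longrightarrow> 0 \<le> w x \<and> w x \<le> 1"
    and u: "\<And>x. x \<in> {-1..1} \<Longrightarrow> 0 \<le> u x \<and> u x \<le> 1"
    and on_support: "\<And>x. x \<in> {-1..1} \<Longrightarrow> w x \<noteq> 0 \<Longrightarrow> rm \<le> u x \<and> u x \<le> rp"
  shows "- M0 rm rp * integral\<^sup>L leb w \<le> integral\<^sup>L leb (\<lambda>x. w x * sfun (u x))"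
    and "integral\<^sup>L leb (\<lambda>x. w x * sfun (u x)) \<le> - m0 rm rp * integral\<^sup>L leb w"
proof -
  have [simp]: "integrable leb w" "integrable leb (\<lambda>x. w x * sfun (u x))"
    using integrable_zone[OF assms(1-4)] by simp_all
  have "w x * - M0 rm rp \<le> w x * sfun (u x) \<and> w x * sfun (u x) \<le> w x * - m0 rm rp"
    if "x \<in> {-1..1}" for x
  proof (cases "w x = 0")
    case False
    then show ?thesis
      using w[OF that] on_support[OF that] m0_le_neg_sfun[of "u x"] neg_sfun_le_M0[of "u x"]
      by (intro conjI mult_left_mono) auto
  qed simp
  then have "integral\<^sup>L leb (\<lambda>x. w x * - M0 rm rp) \<le> integral\<^sup>L leb (\<lambda>x. w x * sfun (u x))"
    "integral\<^sup>L leb (\<lambda>x. w x * sfun (u x)) \<le> integral\<^sup>L leb (\<lambda>x. w x * - m0 rm rp)"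
    by (intro integral_mono; simp)+
  then show "- M0 rm rp * integral\<^sup>L leb w \<le> integral\<^sup>L leb (\<lambda>x. w x * sfun (u x))"
    "integral\<^sup>L leb (\<lambda>x. w x * sfun (u x)) \<le> - m0 rm rp * integral\<^sup>L leb w"
    by (simp_all add: mult.commute)
qed

end

section \<open>The range of \<open>Hsup\<close>\<close>

text \<open>\<open>phi0 rm rp\<close> is the admissible potential value closest to \<open>0\<close>, i.e.\ the maximiser of
  \<open>t/2 - softplus t\<close>; thus \<open>Ehalf\<close> is the level of the constant profile \<open>1/2\<close>.
  \<open>Hmin\<close> and \<open>Hmax\<close> are the minimum and the maximum of \<open>Hsup\<close>.\<close>

definition phi0 :: "real \<Rightarrow> real \<Rightarrow> real" where
  "phi0 rm rp = (if rp < 1/2 then phi_b rp else if 1/2 < rm then phi_b rm else 0)"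

definition Hmin :: "real \<Rightarrow> real \<Rightarrow> real" where
  "Hmin rm rp = min (phi0 rm rp) 0 - softplus (phi0 rm rp)"

definition Hmax :: "real \<Rightarrow> real \<Rightarrow> real" where
  "Hmax rm rp = max (- softplus (phi_b rm)) (phi_b rp - softplus (phi_b rp))"

definition Ehalf :: "real \<Rightarrow> real \<Rightarrow> real" where
  "Ehalf rm rp = gamma (phi0 rm rp) (1/2)"

definition umean :: "(real \<Rightarrow> real) \<Rightarrow> real" where
  "umean \<rho> = (1/2) * integral\<^sup>L leb (\<lambda>x. 1 - \<rho> x)"

context boundary_densities
begin

lemma phi0_range: "phi_b rm \<le> phi0 rm rp \<and> phi0 rm rp \<le> phi_b rp"
  using phi_b_rm_less_rp phi_b_le[of rm "1/2"] phi_b_le[of "1/2" rp] rm_pos rp_less_1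
  unfolding phi0_def by (auto simp: phi_b_half)

lemma umean_range: "\<rho> \<in> Mset \<Longrightarrow> 0 \<le> umean \<rho> \<and> umean \<rho> \<le> 1"
proof -
  assume \<rho>: "\<rho> \<in> Mset"
  have "0 \<le> integral\<^sup>L leb (\<lambda>x. 1 - \<rho> x)"
    using Mset_range[OF \<rho>] by (intro Bochner_Integration.integral_nonneg) auto
  moreover have "integral\<^sup>L leb (\<lambda>x. 1 - \<rho> x) \<le> integral\<^sup>L leb (\<lambda>x. 1)"
    using Mset_range[OF \<rho>] by (intro integral_mono Mset_integrable[OF \<rho>, where B=1]) auto
  ultimately show ?thesis unfolding umean_def by simp
qed

lemma Hsup_ge_const:
  assumes \<rho>: "\<rho> \<in> Mset" and "phi_b rm \<le> c" "c \<le> phi_b rp"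
  shows "umean \<rho> * c - softplus c \<le> Hsup rm rp \<rho>"
proof -
  let ?T = "step3 (phi_b rm) c (phi_b rp) (-1) 1"
  have [measurable]: "\<rho> \<in> borel_measurable leb" "?T \<in> borel_measurable leb"
    using \<rho> by (auto intro: measurable_leb_of_borel)
  have "integral\<^sup>L leb (\<lambda>x. (1 - \<rho> x) * ?T x - softplus (?T x)) = integral\<^sup>L leb (\<lambda>x. c * (1 - \<rho> x) - softplus c)"
  proof (rule integral_cong_AE)
    show "AE x in leb. (1 - \<rho> x) * ?T x - softplus (?T x) = c * (1 - \<rho> x) - softplus c"
      using AE_leb_neq[of 1] AE_space[of leb] by eventually_elim (auto simp: step3_def)
  qed measurable
  also have "\<dots> = 2 * (umean \<rho> * c - softplus c)"
    using Mset_integrable[OF \<rho>, of "\<lambda>r. 1 - r" 1] by (simp add: umean_def)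
  finally show ?thesis
    using Hsup_ge_step3[OF \<rho> _ _ _ assms(2,3), of "-1" 1] by simp
qed

lemma SS_le_neg_sfun_umean:
  assumes \<rho>: "\<rho> \<in> Mset"
  shows "SS \<rho> \<le> - sfun (umean \<rho>)"
proof -
  have [measurable]: "\<rho> \<in> borel_measurable leb" using \<rho> by simp
  have "integral\<^sup>L leb (\<lambda>x. 1 * - sfun (1 - \<rho> x)) \<le> integral\<^sup>L leb (\<lambda>x. 1) * - sfun (umean \<rho>)"
    using umean_range[OF \<rho>] Mset_range[OF \<rho>]
    by (intro integral_neg_sfun_le_mean) (auto simp: umean_def)
  then show ?thesis by (simp add: SS_def sfun_one_minus)
qed

lemma Hsup_le_Hmax:
  assumes \<rho>: "\<rho> \<in> Mset"
  shows "Hsup rm rp \<rho> \<le> Hmax rm rp"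
proof -
  have "(1 - \<rho> x) * t - softplus t \<le> Hmax rm rp"
    if x: "x \<in> {-1..1}" and t: "phi_b rm \<le> t" "t \<le> phi_b rp" for x t
  proof -
    have u: "0 \<le> 1 - \<rho> x" "1 - \<rho> x \<le> 1" using Mset_range[OF \<rho> x] by auto
    have "(1 - \<rho> x) * t \<le> max t 0"
      using u mult_left_le_one_le[of t "1 - \<rho> x"] mult_nonneg_nonpos[of "1 - \<rho> x" t] by (cases "0 \<le> t") auto
    then have "(1 - \<rho> x) * t - softplus t \<le> max (t - softplus t) (- softplus t)" by linarith
    moreover have "t - softplus t \<le> phi_b rp - softplus (phi_b rp)"
      using softplus_mono[of "- phi_b rp" "- t"] softplus_minus[of t] softplus_minus[of "phi_b rp"] t by simp
    moreover have "- softplus t \<le> - softplus (phi_b rm)" using softplus_mono[OF t(1)] by simp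
    ultimately show ?thesis unfolding Hmax_def by linarith
  qed
  then have "Hsup rm rp \<rho> \<le> (1/2) * integral\<^sup>L leb (\<lambda>x. Hmax rm rp)"
    by (intro Hsup_le_half_integral[OF \<rho>]) auto
  then show ?thesis by simp
qed

lemma Hmin_le_Hsup:
  assumes \<rho>: "\<rho> \<in> Mset"
  shows "Hmin rm rp \<le> Hsup rm rp \<rho>"
proof -
  have "min (phi0 rm rp) 0 \<le> umean \<rho> * phi0 rm rp"
    using umean_range[OF \<rho>]
    by (cases "0 \<le> phi0 rm rp") (auto simp: mult_left_le_one_le mult_le_cancel_right1)
  then show ?thesis
    using Hsup_ge_const[OF \<rho>] phi0_range unfolding Hmin_def by force
qed

end

text \<open>\<open>Kbal rm rp c k - c\<close> is the level of the three-step profile encoded by \<open>k\<close> (see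
  \<open>Klevel_profile\<close>) when its middle value \<open>w\<close> satisfies \<open>- sfun w = c\<close>; so \<open>Klevel rm rp e\<close>,
  i.e.\ \<open>K(E)\<close> for \<open>e = E + Vbar rm rp\<close>, consists of the \<open>k\<close> for which some \<open>w \<in> [rm, rp]\<close>
  produces the level \<open>e\<close>.\<close>

definition Kbal :: "real \<Rightarrow> real \<Rightarrow> real \<Rightarrow> real \<times> real \<times> real \<times> real \<Rightarrow> real" where
  "Kbal rm rp c k = (case k of (xm, xp, ym, yp) \<Rightarrow>
     (1/2) * ((xm + 1) * (gamma (phi_b rm) ym + c) + (1 - xp) * (gamma (phi_b rp) yp + c)))"

definition Klevel :: "real \<Rightarrow> real \<Rightarrow> real \<Rightarrow> (real \<times> real \<times> real \<times> real) set" where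
  "Klevel rm rp e = {(xm, xp, ym, yp).
      0 \<le> ym \<and> ym \<le> rm \<and> rm < rp \<and> rp \<le> yp \<and> yp \<le> 1 \<and> -1 \<le> xm \<and> xm \<le> xp \<and> xp \<le> 1 \<and>
      e + m0 rm rp \<le> Kbal rm rp (m0 rm rp) (xm, xp, ym, yp) \<and>
      Kbal rm rp (M0 rm rp) (xm, xp, ym, yp) \<le> e + M0 rm rp}"

lemma mem_Klevel_iff:
  "(xm, xp, ym, yp) \<in> Klevel rm rp e \<longleftrightarrow>
     0 \<le> ym \<and> ym \<le> rm \<and> rm < rp \<and> rp \<le> yp \<and> yp \<le> 1 \<and> -1 \<le> xm \<and> xm \<le> xp \<and> xp \<le> 1 \<and>
     e + m0 rm rp \<le> Kbal rm rp (m0 rm rp) (xm, xp, ym, yp) \<and>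
     Kbal rm rp (M0 rm rp) (xm, xp, ym, yp) \<le> e + M0 rm rp"
  by (simp add: Klevel_def)

lemma Kset_eq_Klevel: "Kset rm rp E = Klevel rm rp (E + Vbar rm rp)"
  by (auto simp: Kset_def Klevel_def Kbal_def)

text \<open>\<open>envelope rm rp u\<close> is the maximum of \<open>u t - softplus t\<close> over the admissible potential values
  \<open>phi_b rm \<le> t \<le> phi_b rp\<close>: the tangent line of \<open>sfun\<close> at \<open>rm\<close> (resp. \<open>rp\<close>) to the left
  (resp. right) of \<open>[rm, rp]\<close>, and \<open>sfun\<close> itself in between.\<close>

definition envelope :: "real \<Rightarrow> real \<Rightarrow> real \<Rightarrow> real" where
  "envelope rm rp u =
     (if u < rm then gamma (phi_b rm) u else if rp < u then gamma (phi_b rp) u else sfun u)"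

lemma envelope_measurable [measurable]: "envelope rm rp \<in> borel_measurable borel"
  unfolding envelope_def by measurable

context boundary_densities
begin

lemma envelope_left: "u \<le> rm \<Longrightarrow> envelope rm rp u = gamma (phi_b rm) u"
  using gamma_phi_b_self[of rm] rm_pos rm_less_rp rp_less_1 by (auto simp: envelope_def)

lemma envelope_right: "rp \<le> u \<Longrightarrow> envelope rm rp u = gamma (phi_b rp) u"
  using gamma_phi_b_self[of rp] rm_pos rm_less_rp rp_less_1 by (auto simp: envelope_def)

lemma envelope_middle: "rm \<le> u \<Longrightarrow> u \<le> rp \<Longrightarrow> envelope rm rp u = sfun u"
  by (auto simp: envelope_def)

lemma dual_le_envelope:
  assumes "0 \<le> u" "u \<le> 1" "phi_b rm \<le> t" "t \<le> phi_b rp"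
  shows "u * t - softplus t \<le> envelope rm rp u"
  using dual_le_tangent[of rm u t] dual_le_tangent[of rp u t] sfun_ge_dual[of u t]
    mult_nonpos_nonneg[of "u - rm" "t - phi_b rm"] mult_nonneg_nonpos[of "u - rp" "t - phi_b rp"]
    assms rm_pos rm_less_rp rp_less_1
  unfolding envelope_def by auto

lemma abs_envelope_le:
  assumes "0 \<le> u" "u \<le> 1"
  shows "\<bar>envelope rm rp u\<bar> \<le> Hbound rm rp + ln 2"
proof -
  have "softplus (phi_b rm) \<le> softplus (phi_b rp)"
    using phi_b_rm_less_rp by (simp add: softplus_mono)
  then show ?thesis
    using abs_sfun_le_ln2[OF assms] abs_gamma_le[OF assms, of "phi_b rm"] abs_gamma_le[OF assms, of "phi_b rp"]
      softplus_pos[of "phi_b rp"] ln_ge_zero[of 2]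
    unfolding envelope_def Hbound_def by auto
qed

lemma Hsup_le_envelope:
  assumes \<rho>: "\<rho> \<in> Mset"
  shows "Hsup rm rp \<rho> \<le> (1/2) * integral\<^sup>L leb (\<lambda>x. envelope rm rp (1 - \<rho> x))"
  using Mset_range[OF \<rho>] dual_le_envelope abs_envelope_le
  by (intro Hsup_le_half_integral[OF \<rho>] Mset_integrable[OF \<rho>, where B="Hbound rm rp + ln 2"]) auto

lemma sfun_fills_gap:
  assumes "0 \<le> l" "- (1/2) * l * M0 rm rp \<le> D" "D \<le> - (1/2) * l * m0 rm rp"
  obtains w where "w \<in> {rm..rp}" "(1/2) * l * sfun w = D"
proof (cases "l = 0")
  case True
  then show ?thesis using assms that[of rm] rm_less_rp by auto
next
  case False
  then have "0 < l" using assms by simp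
  then have "- M0 rm rp \<le> 2 * D / l" "2 * D / l \<le> - m0 rm rp"
    using assms by (simp_all add: field_simps)
  then obtain w where "w \<in> {rm..rp}" "sfun w = 2 * D / l"
    by (rule sfun_attains_between)
  then show ?thesis using that[of w] \<open>0 < l\<close> by simp
qed

text \<open>Each element of \<open>Klevel rm rp e\<close> is realised by a three-step profile: constant densities
  \<open>1 - ym\<close>, \<open>1 - w\<close>, \<open>1 - yp\<close> on \<open>[-1, xm)\<close>, \<open>[xm, xp)\<close>, \<open>[xp, 1]\<close>, the middle value \<open>w\<close> being chosen
  so that \<open>Hsup\<close> equals \<open>e\<close>.\<close>

lemma Klevel_profile:
  assumes k: "(xm, xp, ym, yp) \<in> Klevel rm rp e"
  obtains \<rho> where "\<rho> \<in> Mset" "Hsup rm rp \<rho> = e" "SS \<rho> = Ffun rm rp (xm, xp, ym, yp) - e"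
proof -
  define g1 where "g1 = gamma (phi_b rm) ym"
  define g2 where "g2 = gamma (phi_b rp) yp"
  define D where "D = e - (1/2) * (xm + 1) * g1 - (1/2) * (1 - xp) * g2"
  have kk: "0 \<le> ym" "ym \<le> rm" "rp \<le> yp" "yp \<le> 1" "-1 \<le> xm" "xm \<le> xp" "xp \<le> 1"
    and D: "- (1/2) * (xp - xm) * M0 rm rp \<le> D" "D \<le> - (1/2) * (xp - xm) * m0 rm rp"
    using k unfolding Klevel_def Kbal_def g1_def g2_def D_def by (auto simp: field_simps)
  obtain w where w: "w \<in> {rm..rp}" "(1/2) * (xp - xm) * sfun w = D"
    by (rule sfun_fills_gap[of "xp - xm" D]) (use kk D in simp_all)
  have w01: "0 < w" "w < 1" using w rm_pos rp_less_1 by auto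
  define \<rho> where "\<rho> x = 1 - step3 ym w yp xm xp x" for x
  have \<rho>: "\<rho> \<in> Mset"
    using kk w01 rm_pos rm_less_rp rp_less_1
    unfolding Mset_def \<rho>_def by (auto simp: step3_def intro: measurable_leb_of_borel)
  have e: "(1/2) * integral\<^sup>L leb (step3 g1 (sfun w) g2 xm xp) = e"
    using integral_leb_step3[of xm xp g1 "sfun w" g2] kk w(2) unfolding D_def
    by (simp add: algebra_simps) argo
  let ?T = "step3 (phi_b rm) (phi_b w) (phi_b rp) xm xp"
  have integrand: "(1 - \<rho> x) * ?T x - softplus (?T x) = step3 g1 (sfun w) g2 xm xp x" for x
    using sfun_eq_dual_phi_b[OF w01]
    unfolding \<rho>_def g1_def g2_def step3_def by (simp add: gamma_eq)
  have "e \<le> Hsup rm rp \<rho>"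
    using Hsup_ge_step3[OF \<rho> kk(5,6,7), of "phi_b w"] phi_b_le[of rm w] phi_b_le[of w rp] w rm_pos rp_less_1
    unfolding integrand e by auto
  moreover have "envelope rm rp (1 - \<rho> x) = step3 g1 (sfun w) g2 xm xp x" for x
    using envelope_left[of ym] envelope_middle[of w] envelope_right[of yp] kk w
    unfolding \<rho>_def step3_def g1_def g2_def by simp
  then have "Hsup rm rp \<rho> \<le> e"
    using Hsup_le_envelope[OF \<rho>] e by simp
  moreover have "SS \<rho> = Ffun rm rp (xm, xp, ym, yp) - e"
  proof -
    have "(\<lambda>x. sfun (\<rho> x)) = step3 (sfun ym) (sfun w) (sfun yp) xm xp"
      unfolding \<rho>_def step3_def by (auto simp: sfun_one_minus)
    then have "SS \<rho> = - (1/2) * ((xm + 1) * sfun ym + (xp - xm) * sfun w + (1 - xp) * sfun yp)"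
      unfolding SS_def using integral_leb_step3 kk by simp
    then show ?thesis
      using w(2) unfolding D_def g1_def g2_def Ffun_def by (simp add: algebra_simps) argo
  qed
  ultimately show ?thesis using that \<rho> by simp
qed

text \<open>Split \<open>[-1, 1]\<close> into the zones where \<open>1 - \<rho>\<close> lies below \<open>rm\<close>, above \<open>rp\<close>, or in between
  (of lengths \<open>a\<close>, \<open>b\<close>, \<open>2 - a - b\<close>): the two outer zones are replaced by their mean values
  \<open>ym\<close>, \<open>yp\<close> (Jensen), and the middle zone contributes \<open>D\<close>, bounded through
  \<open>m0 \<le> - sfun \<le> M0\<close> on \<open>[rm, rp]\<close>.\<close>

lemma profile_zones:
  assumes \<rho>: "\<rho> \<in> Mset"
  obtains a b ym yp D where "0 \<le> a" "0 \<le> b" "a + b \<le> 2" "0 \<le> ym" "ym \<le> rm" "rp \<le> yp" "yp \<le> 1"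
    "- (1/2) * (2 - a - b) * M0 rm rp \<le> D" "D \<le> - (1/2) * (2 - a - b) * m0 rm rp"
    "Hsup rm rp \<rho> \<le> (1/2) * a * gamma (phi_b rm) ym + (1/2) * b * gamma (phi_b rp) yp + D"
    "SS \<rho> \<le> (1/2) * a * - sfun ym + (1/2) * b * - sfun yp - D"
proof -
  define u where "u x = 1 - \<rho> x" for x
  define wl where "wl x = (if u x < rm then 1 else 0 :: real)" for x
  define wr where "wr x = (if rp < u x then 1 else 0 :: real)" for x
  define wc where "wc x = 1 - wl x - wr x" for x
  have meas [measurable]: "u \<in> borel_measurable leb" "wl \<in> borel_measurable leb"
    "wr \<in> borel_measurable leb" "wc \<in> borel_measurable leb"
    using \<rho> unfolding u_def wl_def wr_def wc_def by measurable
  have u: "x \<in> {-1..1} \<Longrightarrow> 0 \<le> u x \<and> u x \<le> 1" for x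
    using Mset_range[OF \<rho>] by (simp add: u_def)
  have w: "0 \<le> wl x \<and> wl x \<le> 1" "0 \<le> wr x \<and> wr x \<le> 1" "0 \<le> wc x \<and> wc x \<le> 1" for x
    using rm_less_rp by (auto simp: wl_def wr_def wc_def)
  have [simp]: "integrable leb wl" "integrable leb wr" "integrable leb wc"
    "integrable leb (\<lambda>x. wl x * sfun (u x))" "integrable leb (\<lambda>x. wr x * sfun (u x))"
    "integrable leb (\<lambda>x. wc x * sfun (u x))"
    "integrable leb (\<lambda>x. wl x * gamma \<phi> (u x))" "integrable leb (\<lambda>x. wr x * gamma \<phi> (u x))" for \<phi>
    using integrable_zone[OF meas(2,1) _ u] integrable_zone[OF meas(3,1) _ u] integrable_zone[OF meas(4,1) _ u] w
    by simp_all
  obtain ym where ym: "0 \<le> ym" "ym \<le> rm"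
    "\<And>\<phi>. integral\<^sup>L leb (\<lambda>x. wl x * gamma \<phi> (u x)) = integral\<^sup>L leb wl * gamma \<phi> ym"
    "integral\<^sup>L leb (\<lambda>x. wl x * - sfun (u x)) \<le> integral\<^sup>L leb wl * - sfun ym"
    by (rule zone_average[OF meas(2,1), of 0 rm])
      (use w u rm_pos rm_less_rp rp_less_1 in \<open>auto simp: wl_def split: if_splits\<close>)
  obtain yp where yp: "rp \<le> yp" "yp \<le> 1"
    "\<And>\<phi>. integral\<^sup>L leb (\<lambda>x. wr x * gamma \<phi> (u x)) = integral\<^sup>L leb wr * gamma \<phi> yp"
    "integral\<^sup>L leb (\<lambda>x. wr x * - sfun (u x)) \<le> integral\<^sup>L leb wr * - sfun yp"
    by (rule zone_average[OF meas(3,1), of rp 1])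
      (use w u rm_pos rm_less_rp rp_less_1 in \<open>auto simp: wr_def split: if_splits\<close>)
  define a where "a = integral\<^sup>L leb wl"
  define b where "b = integral\<^sup>L leb wr"
  define D where "D = (1/2) * integral\<^sup>L leb (\<lambda>x. wc x * sfun (u x))"
  have ab: "0 \<le> a" "0 \<le> b" "integral\<^sup>L leb wc = 2 - a - b"
    unfolding a_def b_def using w by (auto intro: Bochner_Integration.integral_nonneg simp: wc_def[abs_def])
  have "0 \<le> integral\<^sup>L leb wc"
    using w by (auto intro: Bochner_Integration.integral_nonneg)
  then have ab_le_2: "a + b \<le> 2" using ab by simp
  have "wc x \<noteq> 0 \<Longrightarrow> rm \<le> u x \<and> u x \<le> rp" for x
    using rm_less_rp by (auto simp: wc_def wl_def wr_def split: if_splits)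
  then have "- M0 rm rp * integral\<^sup>L leb wc \<le> 2 * D" "2 * D \<le> - m0 rm rp * integral\<^sup>L leb wc"
    unfolding D_def using integral_middle_zone[OF meas(4,1) _ u] w(3) by simp_all
  then have D_bounds: "- (1/2) * (2 - a - b) * M0 rm rp \<le> D" "D \<le> - (1/2) * (2 - a - b) * m0 rm rp"
    unfolding ab(3) by (simp_all add: algebra_simps)
  have "envelope rm rp (1 - \<rho> x)
      = wl x * gamma (phi_b rm) (u x) + wr x * gamma (phi_b rp) (u x) + wc x * sfun (u x)" for x
    using rm_less_rp by (auto simp: envelope_def u_def wl_def wr_def wc_def)
  then have Hsup: "Hsup rm rp \<rho> \<le> (1/2) * a * gamma (phi_b rm) ym + (1/2) * b * gamma (phi_b rp) yp + D"
    using Hsup_le_envelope[OF \<rho>] unfolding D_def a_def b_def by (simp add: ym(3) yp(3) field_simps)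
  have "sfun (\<rho> x) = wl x * sfun (u x) + wr x * sfun (u x) + wc x * sfun (u x)" for x
    by (simp add: wc_def u_def sfun_one_minus algebra_simps)
  then have SS: "SS \<rho> \<le> (1/2) * a * - sfun ym + (1/2) * b * - sfun yp - D"
    using ym(4) yp(4) unfolding SS_def D_def a_def b_def by (simp add: field_simps)
  show ?thesis
    by (rule that[OF ab(1,2) ab_le_2 ym(1,2) yp(1,2) D_bounds Hsup SS])
qed

lemma Klevel_dominates_profile:
  assumes \<rho>: "\<rho> \<in> Mset"
  obtains k e where "k \<in> Klevel rm rp e" "Hsup rm rp \<rho> \<le> e" "SS \<rho> \<le> Ffun rm rp k - e"
proof -
  obtain a b ym yp D where zones: "0 \<le> a" "0 \<le> b" "a + b \<le> 2" "0 \<le> ym" "ym \<le> rm" "rp \<le> yp" "yp \<le> 1"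
    "- (1/2) * (2 - a - b) * M0 rm rp \<le> D" "D \<le> - (1/2) * (2 - a - b) * m0 rm rp"
    "Hsup rm rp \<rho> \<le> (1/2) * a * gamma (phi_b rm) ym + (1/2) * b * gamma (phi_b rp) yp + D"
    "SS \<rho> \<le> (1/2) * a * - sfun ym + (1/2) * b * - sfun yp - D"
    by (rule profile_zones[OF \<rho>])
  define e where "e = (1/2) * a * gamma (phi_b rm) ym + (1/2) * b * gamma (phi_b rp) yp + D"
  have "(a - 1, 1 - b, ym, yp) \<in> Klevel rm rp e"
    using zones rm_less_rp unfolding Klevel_def Kbal_def e_def by (simp add: field_simps)
  moreover have "Ffun rm rp (a - 1, 1 - b, ym, yp) - e = (1/2) * a * - sfun ym + (1/2) * b * - sfun yp - D"
    unfolding Ffun_def e_def by (simp add: field_simps)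
  ultimately show ?thesis
    using that zones unfolding e_def by auto
qed

end

text \<open>Below \<open>Ehalf\<close> the best profile at level \<open>e\<close> is constant, \<open>1 - \<rho> = v\<close> with
  \<open>gamma (phi0 rm rp) v = e\<close>; \<open>Slow rm rp e\<close> is its entropy.\<close>

definition Slow :: "real \<Rightarrow> real \<Rightarrow> real \<Rightarrow> real" where
  "Slow rm rp e = (if phi0 rm rp = 0 then ln 2 else - sfun ((e + softplus (phi0 rm rp)) / phi0 rm rp))"

context boundary_densities
begin

lemma SS_le_Slow:
  assumes \<rho>: "\<rho> \<in> Mset" and e: "Hsup rm rp \<rho> = e" "e \<le> Ehalf rm rp"
  shows "SS \<rho> \<le> Slow rm rp e"
proof -
  let ?c = "phi0 rm rp" and ?u = "umean \<rho>"
  define v where "v = (e + softplus ?c) / ?c"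
  have u: "0 \<le> ?u" "?u \<le> 1" using umean_range[OF \<rho>] by auto
  have uv: "?u * ?c \<le> e + softplus ?c" "e + softplus ?c \<le> (1/2) * ?c"
    using Hsup_ge_const[OF \<rho>, of ?c] phi0_range e unfolding Ehalf_def by (auto simp: gamma_eq)
  consider "?c = 0" | "?c < 0" | "0 < ?c" by linarith
  then show ?thesis
  proof cases
    case 1
    then show ?thesis
      using SS_le_neg_sfun_umean[OF \<rho>] neg_sfun_le_ln2[OF u] by (simp add: Slow_def)
  next
    case 2
    then have "1/2 \<le> v" "v \<le> ?u"
      using uv unfolding v_def by (simp_all add: divide_le_eq le_divide_eq mult.commute)
    then show ?thesis
      using SS_le_neg_sfun_umean[OF \<rho>] neg_sfun_le_right[of v ?u] u 2 by (simp add: Slow_def v_def)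
  next
    case 3
    then have "v \<le> 1/2" "?u \<le> v"
      using uv unfolding v_def by (simp_all add: divide_le_eq le_divide_eq mult.commute)
    then show ?thesis
      using SS_le_neg_sfun_umean[OF \<rho>] neg_sfun_le_left[of ?u v] u 3 by (simp add: Slow_def v_def)
  qed
qed

lemma Klevel_low:
  assumes "Hmin rm rp \<le> e" "e \<le> Ehalf rm rp"
  obtains k where "k \<in> Klevel rm rp e" "Ffun rm rp k - e = Slow rm rp e"
proof -
  let ?c = "phi0 rm rp"
  define v where "v = (e + softplus ?c) / ?c"
  have bounds: "min ?c 0 - softplus ?c \<le> e" "e \<le> ?c / 2 - softplus ?c"
    using assms unfolding Hmin_def Ehalf_def by (auto simp: gamma_eq)
  consider "?c = 0" | "?c < 0" | "0 < ?c" by linarith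
  then show ?thesis
  proof cases
    case 1
    then have "rm \<le> 1/2" "1/2 \<le> rp" "e = - ln 2"
      using bounds phi_b_neg[of rp] phi_b_pos[of rm] rm_pos rp_less_1 rm_less_rp
      by (auto simp: phi0_def softplus_0 split: if_splits)
    then have "(-1, 1, 0, 1) \<in> Klevel rm rp e"
      using M0_eq_ln2 m0_le_M0 rm_pos rm_less_rp rp_less_1 by (simp add: Klevel_def Kbal_def)
    moreover have "Ffun rm rp (-1, 1, 0, 1) - e = Slow rm rp e"
      using 1 \<open>e = - ln 2\<close> by (simp add: Ffun_def Slow_def)
    ultimately show ?thesis by (rule that)
  next
    case 2
    then have rp: "rp < 1/2" "?c = phi_b rp"
      using phi_b_pos[of rm] rm_less_rp rp_less_1 by (auto simp: phi0_def split: if_splits)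
    have "1/2 \<le> v" "v \<le> 1" "gamma (phi_b rp) v = e"
      using bounds 2 rp unfolding v_def by (auto simp: gamma_eq divide_le_eq le_divide_eq mult.commute)
    then have "(-1, -1, 0, v) \<in> Klevel rm rp e"
      using rp rm_pos rm_less_rp by (simp add: Klevel_def Kbal_def)
    moreover have "Ffun rm rp (-1, -1, 0, v) - e = Slow rm rp e"
      unfolding Slow_def v_def[symmetric] using \<open>gamma (phi_b rp) v = e\<close> 2 by (simp add: Ffun_def field_simps)
    ultimately show ?thesis by (rule that)
  next
    case 3
    then have rm: "1/2 < rm" "?c = phi_b rm"
      using phi_b_neg[of rp] rm_pos rm_less_rp by (auto simp: phi0_def split: if_splits)
    have "0 \<le> v" "v \<le> 1/2" "gamma (phi_b rm) v = e"
      using bounds 3 rm unfolding v_def by (auto simp: gamma_eq divide_le_eq le_divide_eq mult.commute)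
    then have "(1, 1, v, rp) \<in> Klevel rm rp e"
      using rm rm_less_rp rp_less_1 by (simp add: Klevel_def Kbal_def)
    moreover have "Ffun rm rp (1, 1, v, rp) - e = Slow rm rp e"
      unfolding Slow_def v_def[symmetric] using \<open>gamma (phi_b rm) v = e\<close> 3 by (simp add: Ffun_def field_simps)
    ultimately show ?thesis by (rule that)
  qed
qed

end

section \<open>Mixing\<close>

text \<open>Mean density of the union of two zones of lengths \<open>(1 - t) a1\<close> and \<open>t a2\<close>; when both
  lengths vanish the mean is irrelevant and \<open>y1\<close> is returned.\<close>

definition zmix :: "real \<Rightarrow> real \<Rightarrow> real \<Rightarrow> real \<Rightarrow> real \<Rightarrow> real" where
  "zmix t a1 y1 a2 y2 =
     (if (1 - t) * a1 + t * a2 = 0 then y1 else ((1 - t) * a1 * y1 + t * a2 * y2) / ((1 - t) * a1 + t * a2))"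

lemma zmix_mean:
  assumes "0 \<le> t" "t \<le> 1" "0 \<le> a1" "0 \<le> a2"
  shows "((1 - t) * a1 + t * a2) * zmix t a1 y1 a2 y2 = (1 - t) * a1 * y1 + t * a2 * y2"
proof -
  have "0 \<le> (1 - t) * a1" "0 \<le> t * a2" using assms by simp_all
  then show ?thesis unfolding zmix_def by (auto simp: add_nonneg_eq_0_iff)
qed

lemma zmix_between:
  assumes t: "0 \<le> t" "t \<le> 1" and a: "0 \<le> a1" "0 \<le> a2"
    and y: "lo \<le> y1" "y1 \<le> hi" "lo \<le> y2" "y2 \<le> hi"
  shows "lo \<le> zmix t a1 y1 a2 y2" "zmix t a1 y1 a2 y2 \<le> hi"
proof -
  have w: "0 \<le> (1 - t) * a1" "0 \<le> t * a2" using t a by simp_all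
  have "(1 - t) * a1 * lo + t * a2 * lo \<le> (1 - t) * a1 * y1 + t * a2 * y2"
    "(1 - t) * a1 * y1 + t * a2 * y2 \<le> (1 - t) * a1 * hi + t * a2 * hi"
    using w y by (intro add_mono mult_left_mono; simp)+
  then show "lo \<le> zmix t a1 y1 a2 y2" "zmix t a1 y1 a2 y2 \<le> hi"
    using w y unfolding zmix_def by (auto simp: field_simps add_nonneg_eq_0_iff)
qed

lemma zmix_neg_sfun:
  assumes t: "0 \<le> t" "t \<le> 1" and a: "0 \<le> a1" "0 \<le> a2"
    and y: "0 \<le> y1" "y1 \<le> 1" "0 \<le> y2" "y2 \<le> 1"
  shows "(1 - t) * a1 * - sfun y1 + t * a2 * - sfun y2
    \<le> ((1 - t) * a1 + t * a2) * - sfun (zmix t a1 y1 a2 y2)"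
proof (cases "(1 - t) * a1 + t * a2 = 0")
  case True
  moreover have "0 \<le> (1 - t) * a1" "0 \<le> t * a2" using t a by simp_all
  ultimately have "(1 - t) * a1 = 0" "t * a2 = 0" by linarith+
  then show ?thesis by (simp only: mult_zero_left add_0_left)
next
  case False
  then have "0 < (1 - t) * a1 + t * a2" using t a by (simp add: add_nonneg_nonneg order.strict_iff_order)
  then show ?thesis
    using neg_sfun_concave[of "(1 - t) * a1" "t * a2" y1 y2] t a y False by (simp add: zmix_def)
qed

lemma zmix_gamma:
  assumes "0 \<le> t" "t \<le> 1" "0 \<le> a1" "0 \<le> a2"
  shows "((1 - t) * a1 + t * a2) * gamma \<phi> (zmix t a1 y1 a2 y2)
    = (1 - t) * a1 * gamma \<phi> y1 + t * a2 * gamma \<phi> y2"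
proof -
  note mean = zmix_mean[OF assms, of y1 y2]
  have "((1 - t) * a1 + t * a2) * gamma \<phi> (zmix t a1 y1 a2 y2)
      = \<phi> * (((1 - t) * a1 + t * a2) * zmix t a1 y1 a2 y2) - ((1 - t) * a1 + t * a2) * softplus \<phi>"
    by (simp add: gamma_eq algebra_simps)
  also have "\<dots> = (1 - t) * a1 * gamma \<phi> y1 + t * a2 * gamma \<phi> y2"
    unfolding mean by (simp add: gamma_eq algebra_simps)
  finally show ?thesis .
qed

definition Kmix :: "real \<Rightarrow> real \<times> real \<times> real \<times> real \<Rightarrow> real \<times> real \<times> real \<times> real
    \<Rightarrow> real \<times> real \<times> real \<times> real" where
  "Kmix t k h = (case k of (xm, xp, ym, yp) \<Rightarrow> case h of (xm', xp', ym', yp') \<Rightarrow>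
     ((1 - t) * xm + t * xm', (1 - t) * xp + t * xp',
      zmix t (xm + 1) ym (xm' + 1) ym', zmix t (1 - xp) yp (1 - xp') yp'))"

text \<open>In the coordinates (zone length, zone length times mean density) the constraints \<open>Kbal\<close>
  defining \<open>Klevel\<close> are affine and \<open>Ffun\<close> is concave.\<close>

lemma Kbal_Kmix:
  assumes t: "0 \<le> t" "t \<le> 1" and "-1 \<le> xm" "xp \<le> 1" "-1 \<le> xm'" "xp' \<le> 1"
  shows "Kbal rm rp c (Kmix t (xm, xp, ym, yp) (xm', xp', ym', yp'))
    = (1 - t) * Kbal rm rp c (xm, xp, ym, yp) + t * Kbal rm rp c (xm', xp', ym', yp')"
proof -
  let ?yl = "zmix t (xm + 1) ym (xm' + 1) ym'" and ?yr = "zmix t (1 - xp) yp (1 - xp') yp'"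
  let ?A = "(1 - t) * (xm + 1) + t * (xm' + 1)" and ?B = "(1 - t) * (1 - xp) + t * (1 - xp')"
  have nonneg: "0 \<le> xm + 1" "0 \<le> xm' + 1" "0 \<le> 1 - xp" "0 \<le> 1 - xp'"
    using assms by simp_all
  have "Kbal rm rp c (Kmix t (xm, xp, ym, yp) (xm', xp', ym', yp'))
      = (1/2) * (?A * gamma (phi_b rm) ?yl + ?B * gamma (phi_b rp) ?yr + (?A + ?B) * c)"
    by (simp add: Kbal_def Kmix_def field_simps)
  also have "\<dots> = (1 - t) * Kbal rm rp c (xm, xp, ym, yp) + t * Kbal rm rp c (xm', xp', ym', yp')"
    unfolding zmix_gamma[OF t nonneg(1,2)] zmix_gamma[OF t nonneg(3,4)] by (simp add: Kbal_def field_simps)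
  finally show ?thesis .
qed

lemma Kmix_in_Klevel:
  assumes k: "(xm, xp, ym, yp) \<in> Klevel rm rp e" and h: "(xm', xp', ym', yp') \<in> Klevel rm rp e'"
    and t: "0 \<le> t" "t \<le> 1"
  shows "Kmix t (xm, xp, ym, yp) (xm', xp', ym', yp') \<in> Klevel rm rp ((1 - t) * e + t * e')"
proof -
  let ?yl = "zmix t (xm + 1) ym (xm' + 1) ym'" and ?yr = "zmix t (1 - xp) yp (1 - xp') yp'"
  note kk = k[unfolded mem_Klevel_iff] and hh = h[unfolded mem_Klevel_iff]
  have nonneg: "0 \<le> xm + 1" "0 \<le> xm' + 1" "0 \<le> 1 - xp" "0 \<le> 1 - xp'"
    using kk hh by simp_all
  have k1: "Kmix t (xm, xp, ym, yp) (xm', xp', ym', yp')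
      = ((1 - t) * xm + t * xm', (1 - t) * xp + t * xp', ?yl, ?yr)"
    by (simp add: Kmix_def)
  have bal: "Kbal rm rp c ((1 - t) * xm + t * xm', (1 - t) * xp + t * xp', ?yl, ?yr)
      = (1 - t) * Kbal rm rp c (xm, xp, ym, yp) + t * Kbal rm rp c (xm', xp', ym', yp')" for c
    using Kbal_Kmix[OF t, of xm xp xm' xp' rm rp c ym yp ym' yp'] kk hh unfolding k1 by simp
  have "(1 - t) * (e + m0 rm rp) + t * (e' + m0 rm rp)
      \<le> (1 - t) * Kbal rm rp (m0 rm rp) (xm, xp, ym, yp) + t * Kbal rm rp (m0 rm rp) (xm', xp', ym', yp')"
    "(1 - t) * Kbal rm rp (M0 rm rp) (xm, xp, ym, yp) + t * Kbal rm rp (M0 rm rp) (xm', xp', ym', yp')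
      \<le> (1 - t) * (e + M0 rm rp) + t * (e' + M0 rm rp)"
    using kk hh t by (intro add_mono mult_left_mono; simp)+
  moreover have "0 \<le> ?yl" "?yl \<le> rm" "rp \<le> ?yr" "?yr \<le> 1"
    using zmix_between[OF t nonneg(1,2), of 0 ym rm ym'] zmix_between[OF t nonneg(3,4), of rp yp 1 yp'] kk hh
    by auto
  moreover have "0 \<le> (1 - t) * (xm + 1) + t * (xm' + 1)" "0 \<le> (1 - t) * (1 - xp) + t * (1 - xp')"
    "(1 - t) * xm + t * xm' \<le> (1 - t) * xp + t * xp'"
    by (rule add_nonneg_nonneg add_mono; rule mult_nonneg_nonneg mult_left_mono; use nonneg kk hh t in simp)+
  ultimately show ?thesis
    unfolding k1 mem_Klevel_iff bal using kk by (simp add: algebra_simps)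
qed

lemma Ffun_Kmix:
  assumes k: "(xm, xp, ym, yp) \<in> Klevel rm rp e" and h: "(xm', xp', ym', yp') \<in> Klevel rm rp e'"
    and t: "0 \<le> t" "t \<le> 1"
  shows "(1 - t) * Ffun rm rp (xm, xp, ym, yp) + t * Ffun rm rp (xm', xp', ym', yp')
    \<le> Ffun rm rp (Kmix t (xm, xp, ym, yp) (xm', xp', ym', yp'))"
proof -
  let ?yl = "zmix t (xm + 1) ym (xm' + 1) ym'" and ?yr = "zmix t (1 - xp) yp (1 - xp') yp'"
  let ?A = "(1 - t) * (xm + 1) + t * (xm' + 1)" and ?B = "(1 - t) * (1 - xp) + t * (1 - xp')"
  note kk = k[unfolded mem_Klevel_iff] and hh = h[unfolded mem_Klevel_iff]
  have nonneg: "0 \<le> xm + 1" "0 \<le> xm' + 1" "0 \<le> 1 - xp" "0 \<le> 1 - xp'"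
    using kk hh by simp_all
  have "(1 - t) * (xm + 1) * - sfun ym + t * (xm' + 1) * - sfun ym' \<le> ?A * - sfun ?yl"
    "(1 - t) * (1 - xp) * - sfun yp + t * (1 - xp') * - sfun yp' \<le> ?B * - sfun ?yr"
    using kk hh by (intro zmix_neg_sfun[OF t]; simp)+
  moreover have "Ffun rm rp (Kmix t (xm, xp, ym, yp) (xm', xp', ym', yp'))
      = (1/2) * (?A * - sfun ?yl + ?A * gamma (phi_b rm) ?yl + (?B * - sfun ?yr + ?B * gamma (phi_b rp) ?yr))"
    by (simp add: Kmix_def Ffun_def field_simps)
  ultimately show ?thesis
    unfolding zmix_gamma[OF t nonneg(1,2)] zmix_gamma[OF t nonneg(3,4)] by (simp add: Ffun_def field_simps)
qed

context boundary_densities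
begin

lemma Ffun_le_ln2:
  assumes k: "(xm, xp, ym, yp) \<in> Klevel rm rp e"
  shows "Ffun rm rp (xm, xp, ym, yp) - e \<le> ln 2"
proof -
  have kk: "0 \<le> ym" "ym \<le> rm" "rp \<le> yp" "yp \<le> 1" "-1 \<le> xm" "xm \<le> xp" "xp \<le> 1"
    "(1/2) * ((xm + 1) * (gamma (phi_b rm) ym + M0 rm rp) + (1 - xp) * (gamma (phi_b rp) yp + M0 rm rp))
      \<le> e + M0 rm rp"
    using k by (auto simp: Klevel_def Kbal_def)
  have "(xm + 1) * - sfun ym \<le> (xm + 1) * ln 2" "(1 - xp) * - sfun yp \<le> (1 - xp) * ln 2"
    "(xp - xm) * M0 rm rp \<le> (xp - xm) * ln 2"
    using kk neg_sfun_le_ln2[of ym] neg_sfun_le_ln2[of yp] M0_le_ln2 rm_less_rp rp_less_1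
    by (intro mult_left_mono; simp)+
  then show ?thesis
    using kk(8) unfolding Ffun_def by (simp add: field_simps)
qed

lemma Klevel_half:
  obtains h where "h \<in> Klevel rm rp (Ehalf rm rp)" "Ffun rm rp h = Ehalf rm rp + ln 2"
proof -
  consider "rp < 1/2" | "1/2 < rm" | "rm \<le> 1/2" "1/2 \<le> rp" using rm_less_rp by linarith
  then show ?thesis
  proof cases
    case 1
    then have "Ehalf rm rp = gamma (phi_b rp) (1/2)" by (simp add: Ehalf_def phi0_def)
    then show ?thesis
      using that[of "(-1, -1, 0, 1/2)"] 1 rm_pos rm_less_rp by (simp add: Klevel_def Kbal_def Ffun_def sfun_half)
  next
    case 2
    then have "Ehalf rm rp = gamma (phi_b rm) (1/2)" using rm_less_rp by (simp add: Ehalf_def phi0_def)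
    then show ?thesis
      using that[of "(1, 1, 1/2, rp)"] 2 rm_less_rp rp_less_1 by (simp add: Klevel_def Kbal_def Ffun_def sfun_half)
  next
    case 3
    then have "Ehalf rm rp = - ln 2" by (simp add: Ehalf_def phi0_def gamma_eq softplus_0)
    then show ?thesis
      using that[of "(-1, 1, 0, 1)"] 3 M0_eq_ln2 m0_le_M0 rm_pos rm_less_rp rp_less_1
      by (simp add: Klevel_def Kbal_def Ffun_def)
  qed
qed

text \<open>Above the level \<open>Ehalf\<close>, lowering the level never decreases \<open>Ffun - e\<close>: mix in the
  configuration of \<open>Klevel_half\<close>, which has the maximal value \<open>ln 2\<close> of \<open>Ffun - e\<close>.\<close>

lemma Klevel_descend:
  assumes k: "k \<in> Klevel rm rp e2" and e: "Ehalf rm rp \<le> e1" "e1 \<le> e2"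
  obtains k1 where "k1 \<in> Klevel rm rp e1" "Ffun rm rp k - e2 \<le> Ffun rm rp k1 - e1"
proof (cases "e1 = e2")
  case True
  then show ?thesis using that k by blast
next
  case False
  obtain h where h: "h \<in> Klevel rm rp (Ehalf rm rp)" "Ffun rm rp h = Ehalf rm rp + ln 2"
    by (rule Klevel_half)
  define t where "t = (e2 - e1) / (e2 - Ehalf rm rp)"
  have pos: "0 < e2 - Ehalf rm rp" using e False by simp
  then have "t * (e2 - Ehalf rm rp) = e2 - e1" by (simp add: t_def)
  then have t: "0 \<le> t" "t \<le> 1" "e1 = (1 - t) * e2 + t * Ehalf rm rp"
    using e pos unfolding right_diff_distrib left_diff_distrib mult_1_left
    by (auto simp: t_def divide_le_eq)
  obtain xm xp ym yp where kk: "k = (xm, xp, ym, yp)" by (cases k)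
  obtain xm' xp' ym' yp' where hh: "h = (xm', xp', ym', yp')" by (cases h)
  have "Kmix t k h \<in> Klevel rm rp e1" "(1 - t) * Ffun rm rp k + t * Ffun rm rp h \<le> Ffun rm rp (Kmix t k h)"
    using Kmix_in_Klevel[of xm xp ym yp rm rp e2 xm' xp' ym' yp' "Ehalf rm rp" t]
      Ffun_Kmix[of xm xp ym yp rm rp e2 xm' xp' ym' yp' "Ehalf rm rp" t] k h t kk hh by simp_all
  moreover have "t * (Ffun rm rp k - e2) \<le> t * ln 2"
    using Ffun_le_ln2 k t(1) kk by (simp add: mult_left_mono)
  ultimately show ?thesis
    using that[of "Kmix t k h"] h(2) t(3) by (simp add: algebra_simps)
qed

end

section \<open>The variational formula\<close>

lemma Sup_ereal_image_shift:
  fixes f :: "'a \<Rightarrow> real" and g :: "'b \<Rightarrow> real"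
  assumes fg: "\<And>x. x \<in> A \<Longrightarrow> \<exists>y\<in>B. f x \<le> g y - c"
    and gf: "\<And>y. y \<in> B \<Longrightarrow> \<exists>x\<in>A. g y - c \<le> f x"
  shows "Sup ((\<lambda>x. ereal (f x)) ` A) = Sup ((\<lambda>y. ereal (g y)) ` B) - ereal c"
proof (rule order.antisym)
  show "Sup ((\<lambda>x. ereal (f x)) ` A) \<le> Sup ((\<lambda>y. ereal (g y)) ` B) - ereal c"
  proof (rule Sup_least, clarify)
    fix x assume "x \<in> A"
    then obtain y where "y \<in> B" "f x \<le> g y - c" using fg by blast
    then have "ereal (f x) \<le> ereal (g y) - ereal c" by simp
    also have "\<dots> \<le> Sup ((\<lambda>y. ereal (g y)) ` B) - ereal c"
      using \<open>y \<in> B\<close> by (intro ereal_minus_mono Sup_upper) auto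
    finally show "ereal (f x) \<le> Sup ((\<lambda>y. ereal (g y)) ` B) - ereal c" .
  qed
  have "Sup ((\<lambda>y. ereal (g y)) ` B) \<le> Sup ((\<lambda>x. ereal (f x)) ` A) + ereal c"
  proof (rule Sup_least, clarify)
    fix y assume "y \<in> B"
    then obtain x where "x \<in> A" "g y - c \<le> f x" using gf by blast
    then have "ereal (g y) \<le> ereal (f x) + ereal c" by simp
    also have "\<dots> \<le> Sup ((\<lambda>x. ereal (f x)) ` A) + ereal c"
      using \<open>x \<in> A\<close> by (intro add_right_mono Sup_upper) auto
    finally show "ereal (g y) \<le> Sup ((\<lambda>x. ereal (f x)) ` A) + ereal c" .
  qed
  then show "Sup ((\<lambda>y. ereal (g y)) ` B) - ereal c \<le> Sup ((\<lambda>x. ereal (f x)) ` A)"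
    by (simp add: ereal_minus_le)
qed

context boundary_densities
begin

lemma Klevel_dominates_level:
  assumes \<rho>: "\<rho> \<in> Mset" and e: "Hsup rm rp \<rho> = e"
  obtains k where "k \<in> Klevel rm rp e" "SS \<rho> \<le> Ffun rm rp k - e"
proof (cases "e \<le> Ehalf rm rp")
  case True
  obtain k where "k \<in> Klevel rm rp e" "Ffun rm rp k - e = Slow rm rp e"
    using Klevel_low Hmin_le_Hsup[OF \<rho>] e True by metis
  then show ?thesis using that SS_le_Slow[OF \<rho> e True] by simp
next
  case False
  obtain k' e' where k': "k' \<in> Klevel rm rp e'" "e \<le> e'" "SS \<rho> \<le> Ffun rm rp k' - e'"
    using Klevel_dominates_profile[OF \<rho>] e by metis
  obtain k where "k \<in> Klevel rm rp e" "Ffun rm rp k' - e' \<le> Ffun rm rp k - e"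
    by (rule Klevel_descend[OF k'(1), of e]) (use False k'(2) in auto)
  then show ?thesis using that k'(3) by simp
qed

lemma Klevel_Hmax_nonempty: "Klevel rm rp (Hmax rm rp) \<noteq> {}"
proof (cases "phi_b rp - softplus (phi_b rp) \<le> - softplus (phi_b rm)")
  case True
  then have "(1, 1, 0, rp) \<in> Klevel rm rp (Hmax rm rp)"
    using rm_pos rm_less_rp rp_less_1 by (simp add: Klevel_def Kbal_def Hmax_def gamma_eq)
  then show ?thesis by blast
next
  case False
  then have "(-1, -1, 0, 1) \<in> Klevel rm rp (Hmax rm rp)"
    using rm_pos rm_less_rp rp_less_1 by (simp add: Klevel_def Kbal_def Hmax_def gamma_eq)
  then show ?thesis by blast
qed

lemma Klevel_nonempty_iff: "Klevel rm rp e \<noteq> {} \<longleftrightarrow> e \<in> Hsup rm rp ` Mset"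
proof
  assume "Klevel rm rp e \<noteq> {}"
  then obtain xm xp ym yp where "(xm, xp, ym, yp) \<in> Klevel rm rp e" by auto
  then obtain \<rho> where "\<rho> \<in> Mset" "Hsup rm rp \<rho> = e" by (rule Klevel_profile)
  then show "e \<in> Hsup rm rp ` Mset" by blast
next
  assume "e \<in> Hsup rm rp ` Mset"
  then obtain \<rho> where "\<rho> \<in> Mset" "Hsup rm rp \<rho> = e" by blast
  then obtain k where "k \<in> Klevel rm rp e" by (rule Klevel_dominates_level)
  then show "Klevel rm rp e \<noteq> {}" by blast
qed

lemma Hsup_image: "Hsup rm rp ` Mset = {Hmin rm rp .. Hmax rm rp}"
proof
  show "Hsup rm rp ` Mset \<subseteq> {Hmin rm rp .. Hmax rm rp}"
    using Hmin_le_Hsup Hsup_le_Hmax by auto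
  show "{Hmin rm rp .. Hmax rm rp} \<subseteq> Hsup rm rp ` Mset"
  proof
    fix e assume e: "e \<in> {Hmin rm rp .. Hmax rm rp}"
    have "Klevel rm rp e \<noteq> {}"
    proof (cases "e \<le> Ehalf rm rp")
      case True
      then obtain k where "k \<in> Klevel rm rp e" using Klevel_low[of e] e by (meson atLeastAtMost_iff)
      then show ?thesis by blast
    next
      case False
      obtain k where "k \<in> Klevel rm rp (Hmax rm rp)" using Klevel_Hmax_nonempty by blast
      then obtain k1 where "k1 \<in> Klevel rm rp e"
        by (rule Klevel_descend[of k "Hmax rm rp" e]) (use e False in auto)
      then show ?thesis by blast
    qed
    then show "e \<in> Hsup rm rp ` Mset" using Klevel_nonempty_iff by blast
  qed
qed

lemma Sminus_eq_Sup_Klevel: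
  "Sminus rm rp E = Sup ((\<lambda>k. ereal (Ffun rm rp k)) ` Klevel rm rp (E + Vbar rm rp)) - ereal (E + Vbar rm rp)"
proof -
  have "{\<rho> \<in> Mset. Vminus rm rp \<rho> + SS \<rho> = E} = {\<rho> \<in> Mset. Hsup rm rp \<rho> = E + Vbar rm rp}"
    by (auto simp: Vminus_add_SS)
  moreover have "Sup ((\<lambda>\<rho>. ereal (SS \<rho>)) ` {\<rho> \<in> Mset. Hsup rm rp \<rho> = E + Vbar rm rp})
      = Sup ((\<lambda>k. ereal (Ffun rm rp k)) ` Klevel rm rp (E + Vbar rm rp)) - ereal (E + Vbar rm rp)"
  proof (rule Sup_ereal_image_shift)
    show "\<exists>k\<in>Klevel rm rp (E + Vbar rm rp). SS \<rho> \<le> Ffun rm rp k - (E + Vbar rm rp)"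
      if "\<rho> \<in> {\<rho> \<in> Mset. Hsup rm rp \<rho> = E + Vbar rm rp}" for \<rho>
      using that Klevel_dominates_level by blast
    show "\<exists>\<rho>\<in>{\<rho> \<in> Mset. Hsup rm rp \<rho> = E + Vbar rm rp}. Ffun rm rp k - (E + Vbar rm rp) \<le> SS \<rho>"
      if kK: "k \<in> Klevel rm rp (E + Vbar rm rp)" for k
    proof -
      obtain xm xp ym yp where k: "k = (xm, xp, ym, yp)" by (cases k)
      obtain \<rho> where "\<rho> \<in> Mset" "Hsup rm rp \<rho> = E + Vbar rm rp" "SS \<rho> = Ffun rm rp k - (E + Vbar rm rp)"
        using Klevel_profile[of xm xp ym yp] kK k by auto
      then show ?thesis by force
    qed
  qed
  ultimately show ?thesis unfolding Sminus_def by simp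
qed

lemma Eminf_lo_eq: "Eminf_lo rm rp = Hmin rm rp - Vbar rm rp"
  and Eminf_hi_eq: "Eminf_hi rm rp = Hmax rm rp - Vbar rm rp"
proof -
  have "SS \<rho> + Vminus rm rp \<rho> = Hsup rm rp \<rho> - Vbar rm rp" for \<rho>
    using Vminus_add_SS[of rm rp \<rho>] by simp
  then have "(\<lambda>\<rho>. SS \<rho> + Vminus rm rp \<rho>) ` Mset = (\<lambda>h. h - Vbar rm rp) ` {Hmin rm rp .. Hmax rm rp}"
    unfolding Hsup_image[symmetric] image_image by simp
  moreover have "Hmin rm rp \<le> Hmax rm rp"
    using Hsup_image Klevel_Hmax_nonempty Klevel_nonempty_iff by auto
  ultimately show "Eminf_lo rm rp = Hmin rm rp - Vbar rm rp" "Eminf_hi rm rp = Hmax rm rp - Vbar rm rp"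
    unfolding Eminf_lo_def Eminf_hi_def
    by (auto intro!: cInf_eq_minimum cSup_eq_maximum)
qed

end

theorem proposition4p2:
  fixes rm rp E :: real
  assumes "0 < rm" and "rm < rp" and "rp < 1" and "0 \<le> E"
  shows "Sminus rm rp E = Sup ((\<lambda>k. ereal (Ffun rm rp k)) ` Kset rm rp E) - ereal (E + Vbar rm rp)
     \<and> (Kset rm rp E \<noteq> {} \<longleftrightarrow> E \<in> {Eminf_lo rm rp .. Eminf_hi rm rp})"
proof -
  interpret boundary_densities rm rp
    using assms by unfold_locales
  show ?thesis
    unfolding Kset_eq_Klevel Klevel_nonempty_iff Hsup_image Eminf_lo_eq Eminf_hi_eq
    using Sminus_eq_Sup_Klevel by auto
qed

end
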